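(* Let $R\subseteq S$, $\sigma$ be as in the context, $n=n_1+\cdots+n_\ell$. Let $\mathbf{a}=(a_1,\ldots,a_\ell)\in(S^* )^\ell$ and $\beta_{i,j}\in S$ ($1\le i\le\ell$, $1\le j\le n_i$) satisfy: (i) $a_i-a_j^\beta\in S^*$ for all $\beta\in S^*$ and $1\le i<j\le\ell$; (ii) for each $i$, $\beta_{i,1},\ldots,\beta_{i,n_i}$ are $R$-linearly independent. Let $b_{i,j}=\sigma(\beta_{i,j})a_i\beta_{i,j}^{-1}$. Fix $1\le k\le n-1$ and $t=\lfloor (n-k)/2\rfloor$. Let $\mathbf{c}\in\mathcal{C}_k(\mathbf{a},\boldsymbol\beta)$, let $\mathbf{e}\in S^n$ with ${\rm wt}_{SR}(\mathbf{e})\le t$, and $\mathbf{r}=\mathbf{c}+\mathbf{e}$, with coordinates $c_{i,j},r_{i,j}$. Let $F,H\in S[x;\sigma]$ be the unique skew polynomials of degree less than $n$ with $F(b_{i,j})=c_{i,j}\beta_{i,j}^{-1}$ and $H(b_{i,j})=r_{i,j}\beta_{i,j}^{-1}$ for all $i,j$. If $L,Q\in S[x;\sigma]$ are such that $L$ is monic, $\deg(L)\le t$, $\deg(Q)\le t+k-1$, and $(LH)(b_{i,j})=Q(b_{i,j})$ for all $1\le j\le n_i$, $1\le i\le\ell$, then $Q=LF$.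
   Context: $R$ is a finite commutative chain ring with maximal ideal $\mathfrak{m}$, $q=|R/\mathfrak{m}|$; $S=R[x]/(h)$ with $h$ monic of degree $m$ irreducible modulo $\mathfrak{m}$, local with maximal ideal $\mathfrak{M}=\mathfrak{m}S$ and unit group $S^*=S\setminus\mathfrak{M}$. $\sigma$ is a ring automorphism of $S$ generating the Galois group of $R\subseteq S$, with fixed ring $R$, reducing modulo $\mathfrak{M}$ to $y\mapsto y^q$. $S[x;\sigma]$ is the skew polynomial ring with $xa=\sigma(a)x$. Remainder evaluation: for $P\in S[x;\sigma]$ and $b\in S$, $P(b)$ is the unique $c\in S$ with $P=Q'(x-b)+c$ for some $Q'\in S[x;\sigma]$. For $a\in S$, $\beta\in S^*$: $a^\beta=\sigma(\beta)a\beta^{-1}$; $N_s(a)=\sigma^{s-1}(a)\cdots a$, $\mathcal{D}_a^s(\beta)=\sigma^s(\beta)N_s(a)$. The linearized Reed–Solomon code $\mathcal{C}_k(\mathbf{a},\boldsymbol\beta)\subseteq S^n$ is the $S$-row span of the $k\times n$ matrix with rows $s=0,\ldots,k-1$ and columns $(i,j)$ (ordered $(1,1),\ldots,(1,n_1),\ldots,(\ell,n_\ell)$), entry $\mathcal{D}_{a_i}^s(\beta_{i,j})$. Sum-rank weight: for $\mathbf{u}\in S^s$, ${\rm rk}(\mathbf{u})$ is the number of nonzero diagonal entries of the Smith normal form over $R$ of the $m\times s$ coordinate matrix of $\mathbf{u}$ in an $R$-basis of $S$; for $\mathbf{e}=(\mathbf{e}^{(1)},\ldots,\mathbf{e}^{(\ell)})$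 with $\mathbf{e}^{(i)}\in S^{n_i}$, ${\rm wt}_{SR}(\mathbf{e})=\sum_i{\rm rk}(\mathbf{e}^{(i)})$. *)

theory Defs
  imports "HOL-Computational_Algebra.Polynomial"
begin

(* The ring S is modelled as the whole (finite) type 'a; R is a subset of it. *)

definition is_unit_in :: "'a set \<Rightarrow> 'a::comm_ring_1 \<Rightarrow> bool" where
  "is_unit_in R x \<longleftrightarrow> x \<in> R \<and> (\<exists>y\<in>R. x * y = 1)"

definition nonunits :: "'a::comm_ring_1 set \<Rightarrow> 'a set" where
  "nonunits R = {x \<in> R. \<not> is_unit_in R x}"

definition ring_ideal :: "'a::comm_ring_1 set \<Rightarrow> 'a set \<Rightarrow> bool" where
  "ring_ideal R I \<longleftrightarrow> I \<subseteq> R \<and> 0 \<in> I \<and> (\<forall>x\<in>I. \<forall>y\<in>I. x + y \<in> I)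
     \<and> (\<forall>r\<in>R. \<forall>x\<in>I. r * x \<in> I)"

definition chain_ring :: "'a::comm_ring_1 set \<Rightarrow> bool" where
  "chain_ring R \<longleftrightarrow> (0::'a) \<noteq> 1 \<and>
     (\<forall>I J. ring_ideal R I \<longrightarrow> ring_ideal R J \<longrightarrow> I \<subseteq> J \<or> J \<subseteq> I)"

definition ring_automorphism :: "('a::comm_ring_1 \<Rightarrow> 'a) \<Rightarrow> bool" where
  "ring_automorphism f \<longleftrightarrow> bij f \<and> (\<forall>x y. f (x + y) = f x + f y)
     \<and> (\<forall>x y. f (x * y) = f x * f y) \<and> f 1 = 1"

definition residue_card :: "'a::comm_ring_1 set \<Rightarrow> nat" where
  "residue_card R = card R div card (nonunits R)"

definition inv_S :: "'a::comm_ring_1 \<Rightarrow> 'a" where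
  "inv_S b = (THE y. b * y = 1)"

(* skew polynomials S[x;sigma], represented by their coefficient sequences;
   multiplication: (a x^i)(b x^j) = a sigma^i(b) x^(i+j) *)
definition skew_mult :: "('a::comm_ring_1 \<Rightarrow> 'a) \<Rightarrow> 'a poly \<Rightarrow> 'a poly \<Rightarrow> 'a poly" where
  "skew_mult \<sigma> p q = (\<Sum>i\<le>degree p. monom (coeff p i) i * map_poly (\<sigma> ^^ i) q)"

definition skew_eval :: "('a::comm_ring_1 \<Rightarrow> 'a) \<Rightarrow> 'a poly \<Rightarrow> 'a \<Rightarrow> 'a" where
  "skew_eval \<sigma> P b = (THE c. \<exists>Q'. P = skew_mult \<sigma> Q' [:- b, 1:] + [:c:])"

definition norm_op :: "('a::comm_ring_1 \<Rightarrow> 'a) \<Rightarrow> nat \<Rightarrow> 'a \<Rightarrow> 'a" where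
  "norm_op \<sigma> s a = (\<Prod>i<s. (\<sigma> ^^ i) a)"

definition D_op :: "('a::comm_ring_1 \<Rightarrow> 'a) \<Rightarrow> 'a \<Rightarrow> nat \<Rightarrow> 'a \<Rightarrow> 'a" where
  "D_op \<sigma> a s \<beta> = (\<sigma> ^^ s) \<beta> * norm_op \<sigma> s a"

(* membership in the linearized Reed-Solomon code C_k(a, beta); blocks i < l, positions j < nn i
   (0-based indices) *)
definition lrs_code :: "('a::comm_ring_1 \<Rightarrow> 'a) \<Rightarrow> nat \<Rightarrow> nat \<Rightarrow> (nat \<Rightarrow> nat)
    \<Rightarrow> (nat \<Rightarrow> 'a) \<Rightarrow> (nat \<Rightarrow> nat \<Rightarrow> 'a) \<Rightarrow> (nat \<Rightarrow> nat \<Rightarrow> 'a) \<Rightarrow> bool" where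
  "lrs_code \<sigma> k l nn a \<beta> c \<longleftrightarrow>
     (\<exists>u :: nat \<Rightarrow> 'a. \<forall>i<l. \<forall>j<nn i. c i j = (\<Sum>s<k. u s * D_op \<sigma> (a i) s (\<beta> i j)))"

(* matrices as functions; p = inner dimension *)
definition mat_mult :: "nat \<Rightarrow> (nat \<Rightarrow> nat \<Rightarrow> 'a::comm_ring_1) \<Rightarrow> (nat \<Rightarrow> nat \<Rightarrow> 'a) \<Rightarrow> nat \<Rightarrow> nat \<Rightarrow> 'a" where
  "mat_mult p A B = (\<lambda>i j. \<Sum>l<p. A i l * B l j)"

definition R_invertible :: "'a::comm_ring_1 set \<Rightarrow> nat \<Rightarrow> (nat \<Rightarrow> nat \<Rightarrow> 'a) \<Rightarrow> bool" where
  "R_invertible R d P \<longleftrightarrow> (\<forall>i<d. \<forall>j<d. P i j \<in> R) \<and>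
     (\<exists>P'. (\<forall>i<d. \<forall>j<d. P' i j \<in> R) \<and>
        (\<forall>i<d. \<forall>j<d. mat_mult d P P' i j = (if i = j then 1 else 0)) \<and>
        (\<forall>i<d. \<forall>j<d. mat_mult d P' P i j = (if i = j then 1 else 0)))"

definition R_basis :: "'a::comm_ring_1 set \<Rightarrow> nat \<Rightarrow> (nat \<Rightarrow> 'a) \<Rightarrow> bool" where
  "R_basis R m w \<longleftrightarrow> (\<forall>s. \<exists>!r. (\<forall>i<m. r i \<in> R) \<and> (\<forall>i\<ge>m. r i = 0) \<and> s = (\<Sum>i<m. r i * w i))"

definition coord :: "'a::comm_ring_1 set \<Rightarrow> nat \<Rightarrow> (nat \<Rightarrow> 'a) \<Rightarrow> 'a \<Rightarrow> nat \<Rightarrow> 'a" where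
  "coord R m w s = (THE r. (\<forall>i<m. r i \<in> R) \<and> (\<forall>i\<ge>m. r i = 0) \<and> s = (\<Sum>i<m. r i * w i))"

(* rk(u) for u = (u_0..u_(s-1)) in S^s: number of nonzero diagonal entries of the Smith normal form
   over R of the m x s coordinate matrix of u in an R-basis of S *)
definition snf_rank :: "'a::comm_ring_1 set \<Rightarrow> (nat \<Rightarrow> 'a) \<Rightarrow> nat \<Rightarrow> nat" where
  "snf_rank R u s = (SOME r. \<exists>m w P Q D.
      R_basis R m w \<and> R_invertible R m P \<and> R_invertible R s Q \<and>
      (\<forall>i<m. \<forall>j<s. D i j =
          mat_mult s (mat_mult m P (\<lambda>i' l. coord R m w (u l) i')) Q i j) \<and>
      (\<forall>i<m. \<forall>j<s. i \<noteq> j \<longrightarrow> D i j = 0) \<and>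
      (\<forall>i. i + 1 < min m s \<longrightarrow> (\<exists>x\<in>R. D (i + 1) (i + 1) = x * D i i)) \<and>
      r = card {i. i < min m s \<and> D i i \<noteq> 0})"

definition sum_rank_wt :: "'a::comm_ring_1 set \<Rightarrow> nat \<Rightarrow> (nat \<Rightarrow> nat) \<Rightarrow> (nat \<Rightarrow> nat \<Rightarrow> 'a) \<Rightarrow> nat" where
  "sum_rank_wt R l nn e = (\<Sum>i<l. snf_rank R (\<lambda>j. e i j) (nn i))"

end

theory Submission
  imports Defs "HOL-Combinatorics.Transposition"
begin

text \<open>
  Operator evaluation \<open>P(\<D>\<^sub>a)(\<beta>) = \<Sum>\<^sub>s p\<^sub>s \<sigma>\<^sup>s(\<beta>) N\<^sub>s(a)\<close> turns skew multiplication into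
  composition, and the remainder of \<open>P\<close> at \<open>\<sigma>(\<beta>) a \<beta>\<^sup>-\<^sup>1\<close> is \<open>P(\<D>\<^sub>a)(\<beta>) \<beta>\<^sup>-\<^sup>1\<close>.
  The core is a root bound: if a nonzero \<open>P\<close> annihilates \<open>R\<close>-independent families \<open>\<gamma>\<^sub>i\<close>
  under the operators \<open>\<D>\<^sub>a\<^sub>i\<close>, with the \<open>a\<^sub>i\<close> in distinct conjugacy classes (condition (i)),
  then \<open>deg P\<close> is at least the total size of the families. Dividing out the root \<open>x - b\<close>
  given by one \<open>\<gamma>\<close> maps every family through \<open>\<D>\<^sub>a\<^sub>i - b\<close>, which is injective on the other
  classes and has kernel \<open>R \<gamma>\<close> on the class of \<open>\<gamma>\<close>. Both facts use that \<open>S\<close> is a finite local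
  ring with maximal ideal \<open>\<pi>S\<close>, a consequence of the irreducibility of \<open>h\<close> modulo \<open>\<mm>\<close>.

  The codeword \<open>c\<close> is the evaluation of a polynomial \<open>f\<close> of degree \<open>< k\<close>, so \<open>F = f\<close> by the
  root bound, and \<open>G = Q - L f\<close> satisfies \<open>G(\<D>\<^sub>a\<^sub>i)(\<beta>\<^sub>i\<^sub>,\<^sub>j) = L(\<D>\<^sub>a\<^sub>i)(e\<^sub>i\<^sub>,\<^sub>j)\<close>.
  Recombining the error block \<open>e\<^sub>i\<close> over \<open>R\<close> according to its Smith normal form yields
  \<open>n\<^sub>i - rk(e\<^sub>i)\<close> independent combinations of the \<open>\<beta>\<^sub>i\<^sub>,\<^sub>j\<close> on which \<open>G\<close> vanishes; there are
  at least \<open>n - t > t + k - 1 \<ge> deg G\<close> of them, so \<open>G = 0\<close>.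
\<close>

section \<open>Skew polynomials and operator evaluation\<close>

lemma ring_automorphism_add: "ring_automorphism f \<Longrightarrow> f (x + y) = f x + f y"
  and ring_automorphism_mult: "ring_automorphism f \<Longrightarrow> f (x * y) = f x * f y"
  and ring_automorphism_1: "ring_automorphism f \<Longrightarrow> f 1 = 1"
  unfolding ring_automorphism_def by blast+

lemma ring_automorphism_0: "ring_automorphism f \<Longrightarrow> f 0 = 0"
  using ring_automorphism_add[of f 0 0] by simp

lemma ring_automorphism_uminus: "ring_automorphism f \<Longrightarrow> f (- x) = - f x"
  using ring_automorphism_add[of f x "- x"] ring_automorphism_0[of f] by (simp add: add_eq_0_iff2)

lemma ring_automorphism_diff: "ring_automorphism f \<Longrightarrow> f (x - y) = f x - f y"
  using ring_automorphism_add[of f x "- y"] ring_automorphism_uminus[of f y] by simp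

lemma ring_automorphism_sum: "ring_automorphism f \<Longrightarrow> f (\<Sum>j\<in>A. g j) = (\<Sum>j\<in>A. f (g j))"
  by (induction A rule: infinite_finite_induct) (simp_all add: ring_automorphism_0 ring_automorphism_add)

lemma ring_automorphism_funpow: "ring_automorphism f \<Longrightarrow> ring_automorphism (f ^^ n)"
proof -
  assume f: "ring_automorphism f"
  have "(f ^^ n) (x + y) = (f ^^ n) x + (f ^^ n) y" "(f ^^ n) (x * y) = (f ^^ n) x * (f ^^ n) y"
    "(f ^^ n) 1 = 1" for x y
    by (induction n) (simp_all add: ring_automorphism_add[OF f] ring_automorphism_mult[OF f]
        ring_automorphism_1[OF f])
  then show ?thesis
    using f unfolding ring_automorphism_def by simp
qed

lemma ring_automorphism_unit: "ring_automorphism f \<Longrightarrow> b * c = 1 \<Longrightarrow> f b * f c = 1"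
  by (metis ring_automorphism_1 ring_automorphism_mult)

lemma unit_mult: "(a::'a::comm_semiring_1) dvd 1 \<Longrightarrow> b dvd 1 \<Longrightarrow> a * b dvd 1"
  using mult_dvd_mono[of a 1 b 1] by simp

lemma inv_S_eq: "(b::'a::comm_ring_1) * c = 1 \<Longrightarrow> inv_S b = c"
  unfolding inv_S_def by (rule the_equality) (auto, metis mult.assoc mult.commute mult_1_left)

lemma inv_S_right: "(b::'a::comm_ring_1) dvd 1 \<Longrightarrow> b * inv_S b = 1"
  by (metis dvdE inv_S_eq)

locale skew_poly_ring =
  fixes \<sigma> :: "'a::comm_ring_1 \<Rightarrow> 'a"
  assumes aut: "ring_automorphism \<sigma>"
begin

lemmas aut_add[simp] = ring_automorphism_add[OF aut]
  and aut_mult[simp] = ring_automorphism_mult[OF aut]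
  and aut_0[simp] = ring_automorphism_0[OF aut]
  and aut_1[simp] = ring_automorphism_1[OF aut]
  and aut_uminus[simp] = ring_automorphism_uminus[OF aut]
  and aut_diff[simp] = ring_automorphism_diff[OF aut]

lemma aut_pow: "ring_automorphism (\<sigma> ^^ n)"
  using aut by (rule ring_automorphism_funpow)

lemmas pow_add[simp] = ring_automorphism_add[OF aut_pow]
  and pow_mult[simp] = ring_automorphism_mult[OF aut_pow]
  and pow_0[simp] = ring_automorphism_0[OF aut_pow]
  and pow_1[simp] = ring_automorphism_1[OF aut_pow]
  and pow_uminus[simp] = ring_automorphism_uminus[OF aut_pow]
  and pow_diff[simp] = ring_automorphism_diff[OF aut_pow]
  and pow_sum = ring_automorphism_sum[OF aut_pow]

lemma pow_pow: "(\<sigma> ^^ i) ((\<sigma> ^^ j) x) = (\<sigma> ^^ (i + j)) x"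
  by (simp add: funpow_add)

lemma pow_fixed: "\<sigma> r = r \<Longrightarrow> (\<sigma> ^^ i) r = r"
  by (induction i) auto

lemma norm_op_Suc: "norm_op \<sigma> (Suc s) a = norm_op \<sigma> s a * (\<sigma> ^^ s) a"
  by (simp add: norm_op_def)

lemma norm_op_add: "norm_op \<sigma> (i + j) a = norm_op \<sigma> i a * (\<sigma> ^^ i) (norm_op \<sigma> j a)"
  by (induction j) (simp_all add: norm_op_def pow_pow algebra_simps)

lemma D_op_0[simp]: "D_op \<sigma> a 0 g = g"
  by (simp add: D_op_def norm_op_def)

lemma D_op_D_op: "D_op \<sigma> a i (D_op \<sigma> a j g) = D_op \<sigma> a (i + j) g"
  by (simp add: D_op_def norm_op_add pow_pow ac_simps)

lemma D_op_mult: "D_op \<sigma> a i (x * g) = (\<sigma> ^^ i) x * D_op \<sigma> a i g"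
  by (simp add: D_op_def)

lemma D_op_add: "D_op \<sigma> a i (g + g') = D_op \<sigma> a i g + D_op \<sigma> a i g'"
  by (simp add: D_op_def distrib_right)

lemma D_op_sum: "D_op \<sigma> a i (\<Sum>j\<in>A. g j) = (\<Sum>j\<in>A. D_op \<sigma> a i (g j))"
  by (simp add: D_op_def pow_sum sum_distrib_right)

lemma norm_op_conj:
  "\<gamma> * \<gamma>' = 1 \<Longrightarrow> norm_op \<sigma> s (\<sigma> \<gamma> * a * \<gamma>') = (\<sigma> ^^ s) \<gamma> * norm_op \<sigma> s a * \<gamma>'"
proof (induction s)
  case (Suc s)
  have unit: "(\<sigma> ^^ s) \<gamma> * (\<sigma> ^^ s) \<gamma>' = 1"
    using ring_automorphism_unit[OF aut_pow Suc.prems] .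
  have "norm_op \<sigma> (Suc s) (\<sigma> \<gamma> * a * \<gamma>')
      = ((\<sigma> ^^ s) \<gamma> * (\<sigma> ^^ s) \<gamma>') * ((\<sigma> ^^ Suc s) \<gamma> * (norm_op \<sigma> s a * (\<sigma> ^^ s) a) * \<gamma>')"
    using Suc by (simp add: norm_op_Suc funpow_Suc_right del: funpow.simps)
  then show ?case
    by (simp add: unit norm_op_Suc algebra_simps)
qed (simp add: norm_op_def)

lemma coeff_skew_mult:
  "coeff (skew_mult \<sigma> p q) n = (\<Sum>i\<le>n. coeff p i * (\<sigma> ^^ i) (coeff q (n - i)))"
proof -
  define g where "g i = (if i \<le> n then coeff p i * (\<sigma> ^^ i) (coeff q (n - i)) else 0)" for i
  have "coeff (skew_mult \<sigma> p q) n = (\<Sum>i\<le>degree p. g i)"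
    unfolding skew_mult_def g_def
    by (simp add: coeff_sum coeff_monom_mult) (rule sum.cong, auto simp: coeff_map_poly)
  also have "\<dots> = (\<Sum>i\<le>degree p + n. g i)"
    by (rule sum.mono_neutral_left) (auto simp: g_def coeff_eq_0)
  also have "\<dots> = (\<Sum>i\<le>n. g i)"
    by (rule sum.mono_neutral_right) (auto simp: g_def)
  finally show ?thesis
    by (simp add: g_def)
qed

lemma skew_mult_add_left: "skew_mult \<sigma> (p + p') q = skew_mult \<sigma> p q + skew_mult \<sigma> p' q"
  by (rule poly_eqI) (simp add: coeff_skew_mult sum.distrib ring_distribs)

lemma skew_mult_diff_left: "skew_mult \<sigma> (p - p') q = skew_mult \<sigma> p q - skew_mult \<sigma> p' q"
  by (rule poly_eqI) (simp add: coeff_skew_mult sum_subtractf ring_distribs)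

lemma skew_mult_0_left[simp]: "skew_mult \<sigma> 0 q = 0"
  by (rule poly_eqI) (simp add: coeff_skew_mult)

lemma degree_skew_mult_le: "degree (skew_mult \<sigma> p q) \<le> degree p + degree q"
proof (rule degree_le, intro allI impI)
  fix n assume n: "degree p + degree q < n"
  have "coeff p i * (\<sigma> ^^ i) (coeff q (n - i)) = 0" for i
    using n by (cases "i \<le> degree p") (simp_all add: coeff_eq_0)
  then show "coeff (skew_mult \<sigma> p q) n = 0"
    by (simp add: coeff_skew_mult)
qed

lemma coeff_skew_mult_linear:
  "coeff (skew_mult \<sigma> p [:- b, 1:]) n = (if n = 0 then 0 else coeff p (n - 1)) - coeff p n * (\<sigma> ^^ n) b"
proof (cases n)
  case (Suc m)
  have "(\<Sum>i<m. coeff p i * (\<sigma> ^^ i) (coeff [:- b, 1:] (Suc m - i))) = 0"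
    by (rule sum.neutral) (auto simp: coeff_pCons split: nat.split)
  then show ?thesis
    unfolding Suc coeff_skew_mult atMost_Suc lessThan_Suc_atMost[symmetric]
    by (simp add: Suc_diff_le)
qed (simp add: coeff_skew_mult)

lemma coeff_skew_mult_linear_top:
  "p \<noteq> 0 \<Longrightarrow> coeff (skew_mult \<sigma> p [:- b, 1:]) (Suc (degree p)) = lead_coeff p"
  by (simp add: coeff_skew_mult_linear coeff_eq_0)

end

text \<open>\<open>op_eval \<sigma> P a g\<close> is the operator evaluation \<open>P(\<D>\<^sub>a)(g)\<close> of the paper, where
  \<open>\<D>\<^sub>a g = \<sigma>(g) a\<close> and \<open>D_op \<sigma> a s\<close> is the \<open>s\<close>-th power of \<open>\<D>\<^sub>a\<close>.\<close>

definition op_eval :: "('a::comm_ring_1 \<Rightarrow> 'a) \<Rightarrow> 'a poly \<Rightarrow> 'a \<Rightarrow> 'a \<Rightarrow> 'a" where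
  "op_eval \<sigma> P a g = (\<Sum>s\<le>degree P. coeff P s * D_op \<sigma> a s g)"

context skew_poly_ring
begin

lemma op_eval_eq_sum: "degree P \<le> K \<Longrightarrow> op_eval \<sigma> P a g = (\<Sum>s\<le>K. coeff P s * D_op \<sigma> a s g)"
  unfolding op_eval_def by (rule sum.mono_neutral_left) (auto simp: coeff_eq_0)

lemma op_eval_0[simp]: "op_eval \<sigma> 0 a g = 0"
  by (simp add: op_eval_def)

lemma op_eval_add: "op_eval \<sigma> (P + Q) a g = op_eval \<sigma> P a g + op_eval \<sigma> Q a g"
  using degree_add_le[of P "max (degree P) (degree Q)" Q]
  by (simp add: op_eval_eq_sum[of _ "max (degree P) (degree Q)"] sum.distrib ring_distribs)

lemma op_eval_diff: "op_eval \<sigma> (P - Q) a g = op_eval \<sigma> P a g - op_eval \<sigma> Q a g"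
  using degree_diff_le[of P "max (degree P) (degree Q)" Q]
  by (simp add: op_eval_eq_sum[of _ "max (degree P) (degree Q)"] sum_subtractf ring_distribs)

lemma op_eval_sum: "op_eval \<sigma> (\<Sum>i\<in>A. P i) a g = (\<Sum>i\<in>A. op_eval \<sigma> (P i) a g)"
  by (induction A rule: infinite_finite_induct) (simp_all add: op_eval_add)

lemma op_eval_add_right: "op_eval \<sigma> P a (g + g') = op_eval \<sigma> P a g + op_eval \<sigma> P a g'"
  by (simp add: op_eval_def D_op_add sum.distrib ring_distribs)

lemma op_eval_0_right[simp]: "op_eval \<sigma> P a 0 = 0"
  by (simp add: op_eval_def D_op_def)

lemma op_eval_fixed_mult_right: "\<sigma> r = r \<Longrightarrow> op_eval \<sigma> P a (r * g) = r * op_eval \<sigma> P a g"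
  unfolding op_eval_def D_op_mult pow_fixed[of r] by (simp add: sum_distrib_left ac_simps)

lemma op_eval_sum_right: "op_eval \<sigma> P a (\<Sum>j\<in>A. g j) = (\<Sum>j\<in>A. op_eval \<sigma> P a (g j))"
  by (induction A rule: infinite_finite_induct) (simp_all add: op_eval_add_right)

lemma op_eval_monom_mult:
  "op_eval \<sigma> (monom c i * map_poly (\<sigma> ^^ i) q) a g = c * D_op \<sigma> a i (op_eval \<sigma> q a g)"
proof -
  define d where "d = degree q"
  have "degree (monom c i * map_poly (\<sigma> ^^ i) q) \<le> i + d"
    by (rule degree_le) (auto simp: coeff_monom_mult coeff_map_poly coeff_eq_0 d_def)
  then have "op_eval \<sigma> (monom c i * map_poly (\<sigma> ^^ i) q) a g
      = (\<Sum>s\<le>i + d. (if s < i then 0 else c * (\<sigma> ^^ i) (coeff q (s - i))) * D_op \<sigma> a s g)"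
    by (simp add: op_eval_eq_sum coeff_monom_mult coeff_map_poly cong: if_cong)
  also have "\<dots> = (\<Sum>s\<in>{0 + i..d + i}. c * (\<sigma> ^^ i) (coeff q (s - i)) * D_op \<sigma> a s g)"
    by (rule sum.mono_neutral_cong_right) auto
  also have "\<dots> = (\<Sum>s\<le>d. c * (\<sigma> ^^ i) (coeff q s) * D_op \<sigma> a (s + i) g)"
    by (simp only: sum.shift_bounds_cl_nat_ivl atLeast0AtMost) simp
  also have "\<dots> = c * D_op \<sigma> a i (op_eval \<sigma> q a g)"
    by (simp add: op_eval_def d_def D_op_sum D_op_mult D_op_D_op sum_distrib_left add.commute mult.assoc)
  finally show ?thesis .
qed

lemma op_eval_skew_mult: "op_eval \<sigma> (skew_mult \<sigma> p q) a g = op_eval \<sigma> p a (op_eval \<sigma> q a g)"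
  unfolding skew_mult_def op_eval_sum op_eval_monom_mult op_eval_def[of \<sigma> p] ..

lemma op_eval_linear: "op_eval \<sigma> [:- b, 1:] a g = \<sigma> g * a - b * g"
  by (simp add: op_eval_def D_op_def norm_op_def)

lemma op_eval_monom: "op_eval \<sigma> (monom c s) a g = c * D_op \<sigma> a s g"
  by (simp add: op_eval_eq_sum[OF degree_monom_le] coeff_monom if_distrib[of "\<lambda>x. x * _"] cong: if_cong)

lemma op_eval_poly_of_coeffs:
  "op_eval \<sigma> (\<Sum>s<k. monom (u s) s) a g = (\<Sum>s<k. u s * D_op \<sigma> a s g)"
  by (simp add: op_eval_sum op_eval_monom)

text \<open>For the conjugate \<open>b = \<sigma>(\<gamma>) a \<gamma>\<^sup>-\<^sup>1\<close> one has \<open>\<D>\<^sub>a(x \<gamma>) = \<D>\<^sub>b(x) \<gamma>\<close>.\<close>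
lemma op_eval_conj:
  assumes "\<gamma> * \<gamma>' = 1"
  shows "op_eval \<sigma> P (\<sigma> \<gamma> * a * \<gamma>') 1 * \<gamma> = op_eval \<sigma> P a \<gamma>"
proof -
  have "D_op \<sigma> (\<sigma> \<gamma> * a * \<gamma>') s 1 * \<gamma> = D_op \<sigma> a s \<gamma> * (\<gamma>' * \<gamma>)" for s
    unfolding D_op_def norm_op_conj[OF assms] by (simp add: ac_simps)
  then show ?thesis
    using assms by (simp add: op_eval_def sum_distrib_right mult.assoc mult.commute[of \<gamma>'])
qed

lemma skew_div_linear: "\<exists>Q'. P = skew_mult \<sigma> Q' [:- b, 1:] + [:op_eval \<sigma> P b 1:]"
proof (induction "degree P" arbitrary: P rule: less_induct)
  case less
  show ?case
  proof (cases "degree P = 0")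
    case True
    then show ?thesis
      by (intro exI[of _ 0]) (auto simp: op_eval_def elim: degree_eq_zeroE)
  next
    case False
    define M where "M = monom (lead_coeff P) (degree P - 1)"
    define P1 where "P1 = P - skew_mult \<sigma> M [:- b, 1:]"
    have "coeff P1 n = 0" if "degree P - 1 < n" for n
      using that False
      by (cases "n = degree P") (auto simp: P1_def M_def coeff_skew_mult_linear coeff_monom coeff_eq_0)
    then have "degree P1 \<le> degree P - 1"
      by (intro degree_le) simp
    with False have "degree P1 < degree P"
      by linarith
    then obtain Q1 where Q1: "P1 = skew_mult \<sigma> Q1 [:- b, 1:] + [:op_eval \<sigma> P1 b 1:]"
      using less by blast
    have "op_eval \<sigma> P1 b 1 = op_eval \<sigma> P b 1"
      by (simp add: P1_def op_eval_diff op_eval_skew_mult op_eval_linear)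
    moreover have "P = P1 + skew_mult \<sigma> M [:- b, 1:]"
      by (simp add: P1_def)
    ultimately have "P = skew_mult \<sigma> (Q1 + M) [:- b, 1:] + [:op_eval \<sigma> P b 1:]"
      using Q1 by (simp add: skew_mult_add_left)
    then show ?thesis ..
  qed
qed

lemma skew_mult_linear_eq_const: "skew_mult \<sigma> D [:- b, 1:] = [:c:] \<Longrightarrow> D = 0"
  using coeff_skew_mult_linear_top[of D b] by (cases "D = 0") auto

lemma skew_eval_eq_op_eval: "skew_eval \<sigma> P b = op_eval \<sigma> P b 1"
  unfolding skew_eval_def
proof (rule the_equality)
  show "\<exists>Q'. P = skew_mult \<sigma> Q' [:- b, 1:] + [:op_eval \<sigma> P b 1:]"
    by (rule skew_div_linear)
next
  fix c assume "\<exists>Q'. P = skew_mult \<sigma> Q' [:- b, 1:] + [:c:]"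
  then obtain Q' where Q': "P = skew_mult \<sigma> Q' [:- b, 1:] + [:c:]" ..
  obtain Q'' where Q'': "P = skew_mult \<sigma> Q'' [:- b, 1:] + [:op_eval \<sigma> P b 1:]"
    using skew_div_linear by blast
  have "skew_mult \<sigma> Q' [:- b, 1:] = P - [:c:]" "skew_mult \<sigma> Q'' [:- b, 1:] = P - [:op_eval \<sigma> P b 1:]"
    using Q' Q'' unfolding eq_diff_eq by simp_all
  then have "skew_mult \<sigma> (Q' - Q'') [:- b, 1:] = [:op_eval \<sigma> P b 1 - c:]"
    by (simp add: skew_mult_diff_left)
  then have "Q' = Q''"
    by (auto dest: skew_mult_linear_eq_const)
  then show "c = op_eval \<sigma> P b 1"
    using Q' Q'' by simp
qed

lemma skew_eval_conj: "\<beta> dvd 1 \<Longrightarrow> skew_eval \<sigma> P (\<sigma> \<beta> * a * inv_S \<beta>) * \<beta> = op_eval \<sigma> P a \<beta>"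
  by (simp add: skew_eval_eq_op_eval op_eval_conj inv_S_right)

lemma skew_eval_conj_eq:
  assumes "\<beta> dvd 1" "skew_eval \<sigma> P (\<sigma> \<beta> * a * inv_S \<beta>) = x * inv_S \<beta>"
  shows "op_eval \<sigma> P a \<beta> = x"
  using skew_eval_conj[OF assms(1), of P a] assms(2) inv_S_right[OF assms(1)]
  by (simp add: mult.assoc mult.commute[of "inv_S \<beta>"])

lemma op_eval_conj_root:
  assumes "\<gamma> dvd 1" "op_eval \<sigma> P a \<gamma> = 0"
  shows "op_eval \<sigma> P (\<sigma> \<gamma> * a * inv_S \<gamma>) 1 = 0"
proof -
  have "op_eval \<sigma> P (\<sigma> \<gamma> * a * inv_S \<gamma>) 1 * \<gamma> * inv_S \<gamma> = 0"
    using op_eval_conj[OF inv_S_right[OF assms(1)]] assms(2) by simp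
  then show ?thesis
    by (simp add: mult.assoc inv_S_right[OF assms(1)])
qed

lemma skew_root_factor:
  assumes "op_eval \<sigma> P b 1 = 0" "P \<noteq> 0"
  obtains P' where "P = skew_mult \<sigma> P' [:- b, 1:]" "degree P = Suc (degree P')"
proof -
  obtain P' where P: "P = skew_mult \<sigma> P' [:- b, 1:]"
    using skew_div_linear[of P b] assms(1) by auto
  with assms(2) have "P' \<noteq> 0"
    by auto
  then have "Suc (degree P') \<le> degree P"
    using P coeff_skew_mult_linear_top[of P' b] by (simp add: le_degree)
  moreover have "degree P \<le> Suc (degree P')"
    using P degree_skew_mult_le[of P' "[:- b, 1:]"] by simp
  ultimately show ?thesis
    using P that by simp
qed

end

section \<open>Finite chain rings\<close>

lemma power_repeats: "\<exists>i j. i < j \<and> (y::'a::{finite,monoid_mult}) ^ i = y ^ j"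
proof -
  have "\<not> inj (\<lambda>n::nat. y ^ n)"
    using range_inj_infinite finite by blast
  then obtain i j where "i \<noteq> j" "y ^ i = y ^ j"
    unfolding inj_def by blast
  then show ?thesis
    by (metis linorder_neqE_nat)
qed

locale finite_chain_subring =
  fixes R :: "'a::{comm_ring_1,finite} set"
  assumes zero_mem[simp]: "0 \<in> R" and one_mem[simp]: "1 \<in> R"
    and add_mem[simp]: "x \<in> R \<Longrightarrow> y \<in> R \<Longrightarrow> x + y \<in> R"
    and uminus_mem[simp]: "x \<in> R \<Longrightarrow> - x \<in> R"
    and mult_mem[simp]: "x \<in> R \<Longrightarrow> y \<in> R \<Longrightarrow> x * y \<in> R"
    and chain: "chain_ring R"
begin

lemma zero_neq_one: "(0::'a) \<noteq> 1"
  using chain unfolding chain_ring_def by blast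

lemma diff_mem[simp]: "x \<in> R \<Longrightarrow> y \<in> R \<Longrightarrow> x - y \<in> R"
  using add_mem[of x "- y"] by simp

lemma sum_mem: "(\<And>i. i \<in> A \<Longrightarrow> f i \<in> R) \<Longrightarrow> (\<Sum>i\<in>A. f i) \<in> R"
  by (induction A rule: infinite_finite_induct) auto

lemma power_mem: "x \<in> R \<Longrightarrow> x ^ n \<in> R"
  by (induction n) auto

lemma principal_ideal:
  assumes "x \<in> R"
  shows "ring_ideal R {x * r | r. r \<in> R}"
  unfolding ring_ideal_def
proof (intro conjI ballI)
  fix y z assume "y \<in> {x * r | r. r \<in> R}" "z \<in> {x * r | r. r \<in> R}"
  then obtain r r' where "r \<in> R" "r' \<in> R" "y = x * r" "z = x * r'"
    by blast
  then show "y + z \<in> {x * r | r. r \<in> R}"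
    by (auto simp: distrib_left intro!: exI[of _ "r + r'"])
next
  fix s y assume "s \<in> R" "y \<in> {x * r | r. r \<in> R}"
  then obtain r where "r \<in> R" "y = x * r"
    by blast
  with \<open>s \<in> R\<close> show "s * y \<in> {x * r | r. r \<in> R}"
    by (auto simp: mult.left_commute intro!: exI[of _ "s * r"])
qed (use assms in \<open>auto intro!: exI[of _ 0]\<close>)

lemma dvd_chain: "x \<in> R \<Longrightarrow> y \<in> R \<Longrightarrow> (\<exists>r\<in>R. x = y * r) \<or> (\<exists>r\<in>R. y = x * r)"
proof -
  assume "x \<in> R" "y \<in> R"
  then have "{x * r | r. r \<in> R} \<subseteq> {y * r | r. r \<in> R} \<or> {y * r | r. r \<in> R} \<subseteq> {x * r | r. r \<in> R}"
    using chain principal_ideal unfolding chain_ring_def by blast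
  moreover have "x \<in> {x * r | r. r \<in> R}" "y \<in> {y * r | r. r \<in> R}"
    by (auto intro!: exI[of _ 1])
  ultimately show ?thesis
    by blast
qed

lemma ex_divisor_of_all:
  "finite A \<Longrightarrow> A \<noteq> {} \<Longrightarrow> A \<subseteq> R \<Longrightarrow> \<exists>p\<in>A. \<forall>x\<in>A. \<exists>r\<in>R. x = p * r"
proof (induction A rule: finite_ne_induct)
  case (singleton x)
  then show ?case
    by (auto intro!: bexI[of _ 1])
next
  case (insert x A)
  then obtain p where p: "p \<in> A" "\<forall>y\<in>A. \<exists>r\<in>R. y = p * r"
    by auto
  show ?case
  proof (cases "\<exists>r\<in>R. x = p * r")
    case True
    then show ?thesis
      using p by auto
  next
    case False
    have "x \<in> R" "p \<in> R"
      using insert.prems p(1) by auto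
    then obtain r where r: "r \<in> R" "p = x * r"
      using dvd_chain False by blast
    have "\<exists>r'\<in>R. y = x * r'" if "y \<in> A" for y
    proof -
      obtain s where "s \<in> R" "y = p * s"
        using p(2) \<open>y \<in> A\<close> by blast
      then show ?thesis
        using r by (auto intro!: bexI[of _ "r * s"] simp: mult.assoc)
    qed
    then have "\<forall>y\<in>insert x A. \<exists>r\<in>R. y = x * r"
      by (auto intro!: bexI[of _ 1])
    then show ?thesis
      by auto
  qed
qed

abbreviation max_ideal :: "'a set" where
  "max_ideal \<equiv> nonunits R"

lemma mem_max_ideal_iff: "x \<in> max_ideal \<longleftrightarrow> x \<in> R \<and> \<not> (\<exists>y\<in>R. x * y = 1)"
  unfolding nonunits_def is_unit_in_def by auto

lemma zero_mem_max_ideal[simp]: "0 \<in> max_ideal"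
  using zero_neq_one by (simp add: mem_max_ideal_iff)

lemma one_not_mem_max_ideal: "1 \<notin> max_ideal"
  by (auto simp: mem_max_ideal_iff intro: bexI[of _ 1])

lemma mult_mem_max_ideal: "x \<in> max_ideal \<Longrightarrow> r \<in> R \<Longrightarrow> x * r \<in> max_ideal"
  unfolding mem_max_ideal_iff by (metis mult_mem mult.assoc)

lemma add_mem_max_ideal: "x \<in> max_ideal \<Longrightarrow> y \<in> max_ideal \<Longrightarrow> x + y \<in> max_ideal"
proof -
  assume x: "x \<in> max_ideal" and y: "y \<in> max_ideal"
  then have "x \<in> R" "y \<in> R"
    by (simp_all add: mem_max_ideal_iff)
  then consider r where "r \<in> R" "x = y * r" | r where "r \<in> R" "y = x * r"
    using dvd_chain by blast
  then show ?thesis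
  proof cases
    case 1
    then show ?thesis
      using mult_mem_max_ideal[OF y, of "r + 1"] by (simp add: algebra_simps)
  next
    case 2
    then show ?thesis
      using mult_mem_max_ideal[OF x, of "r + 1"] by (simp add: algebra_simps)
  qed
qed

lemma uminus_mem_max_ideal: "x \<in> max_ideal \<Longrightarrow> - x \<in> max_ideal"
  using mult_mem_max_ideal[of x "- 1"] by simp

lemma diff_mem_max_ideal: "x \<in> max_ideal \<Longrightarrow> y \<in> max_ideal \<Longrightarrow> x - y \<in> max_ideal"
  using add_mem_max_ideal uminus_mem_max_ideal by (metis diff_conv_add_uminus)

lemma sum_mem_max_ideal: "(\<And>i. i \<in> A \<Longrightarrow> f i \<in> max_ideal) \<Longrightarrow> (\<Sum>i\<in>A. f i) \<in> max_ideal"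
  by (induction A rule: infinite_finite_induct) (auto intro: add_mem_max_ideal)

lemma inverse_in_R: "x \<in> R \<Longrightarrow> x \<notin> max_ideal \<Longrightarrow> \<exists>y\<in>R. x * y = 1"
  by (simp add: mem_max_ideal_iff)

definition \<pi> :: 'a where
  "\<pi> = (SOME p. p \<in> max_ideal \<and> (\<forall>x\<in>max_ideal. \<exists>r\<in>R. x = p * r))"

lemma \<pi>_generates: "\<pi> \<in> max_ideal" "\<forall>x\<in>max_ideal. \<exists>r\<in>R. x = \<pi> * r"
proof -
  have "\<exists>p\<in>max_ideal. \<forall>x\<in>max_ideal. \<exists>r\<in>R. x = p * r"
  proof (rule ex_divisor_of_all)
    show "max_ideal \<noteq> {}"
      using zero_mem_max_ideal by blast
  qed (auto simp: nonunits_def)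
  then obtain p where "p \<in> max_ideal \<and> (\<forall>x\<in>max_ideal. \<exists>r\<in>R. x = p * r)"
    by blast
  then have "\<pi> \<in> max_ideal \<and> (\<forall>x\<in>max_ideal. \<exists>r\<in>R. x = \<pi> * r)"
    unfolding \<pi>_def by (rule someI)
  then show "\<pi> \<in> max_ideal" "\<forall>x\<in>max_ideal. \<exists>r\<in>R. x = \<pi> * r"
    by auto
qed

lemma \<pi>_mem: "\<pi> \<in> R"
  using \<pi>_generates(1) by (simp add: mem_max_ideal_iff)

lemma mem_max_ideal_iff_\<pi>: "x \<in> max_ideal \<longleftrightarrow> (\<exists>r\<in>R. x = \<pi> * r)"
  using \<pi>_generates(2) mult_mem_max_ideal[OF \<pi>_generates(1)] by blast

lemma \<pi>_power_mem_max_ideal: "0 < k \<Longrightarrow> \<pi> ^ k \<in> max_ideal"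
proof (induction k)
  case (Suc k)
  then show ?case
    using \<pi>_generates(1) mult_mem_max_ideal[of "\<pi> ^ k" \<pi>] \<pi>_mem
    by (cases k) (simp_all add: mult.commute)
qed simp

text \<open>In the finite ring, \<open>\<pi>\<^sup>i = \<pi>\<^sup>j\<close> for some \<open>i < j\<close>; as \<open>1 - \<pi>\<^sup>j\<^sup>-\<^sup>i\<close> is a unit, \<open>\<pi>\<^sup>i = 0\<close>.\<close>
lemma \<pi>_nilpotent: "\<exists>N. \<pi> ^ N = 0"
proof -
  obtain i j where ij: "i < j" "\<pi> ^ i = \<pi> ^ j"
    using power_repeats by blast
  define k where "k = j - i"
  have "\<pi> ^ k \<in> max_ideal"
    using ij(1) by (simp add: k_def \<pi>_power_mem_max_ideal)
  have "1 - \<pi> ^ k \<notin> max_ideal"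
  proof
    assume "1 - \<pi> ^ k \<in> max_ideal"
    then have "(1 - \<pi> ^ k) + \<pi> ^ k \<in> max_ideal"
      using add_mem_max_ideal \<open>\<pi> ^ k \<in> max_ideal\<close> by blast
    then show False
      using one_not_mem_max_ideal by simp
  qed
  moreover have "1 - \<pi> ^ k \<in> R"
    using power_mem[OF \<pi>_mem] by simp
  ultimately obtain z where z: "(1 - \<pi> ^ k) * z = 1"
    using inverse_in_R by blast
  have "\<pi> ^ i * \<pi> ^ k = \<pi> ^ j"
    using ij(1) by (simp add: k_def flip: power_add)
  then have "\<pi> ^ i * (1 - \<pi> ^ k) = 0"
    using ij(2) by (simp add: right_diff_distrib)
  then have "\<pi> ^ i * (1 - \<pi> ^ k) * z = 0"
    by simp
  then have "\<pi> ^ i = 0"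
    by (simp only: mult.assoc z mult_1_right)
  then show ?thesis ..
qed

definition R_poly :: "'a poly \<Rightarrow> bool" where
  "R_poly p \<longleftrightarrow> (\<forall>i. coeff p i \<in> R)"

definition zero_mod_m :: "'a poly \<Rightarrow> bool" where
  "zero_mod_m p \<longleftrightarrow> (\<forall>i. coeff p i \<in> max_ideal)"

lemma coeffs_subset_iff_R_poly: "set (coeffs p) \<subseteq> R \<longleftrightarrow> R_poly p"
proof
  assume coeffs: "set (coeffs p) \<subseteq> R"
  have "coeff p i \<in> R" for i
    using coeff_in_coeffs[of p i] coeffs by (cases "p \<noteq> 0 \<and> i \<le> degree p") (auto simp: coeff_eq_0)
  then show "R_poly p"
    by (simp add: R_poly_def)
qed (auto simp: R_poly_def coeffs_def)

lemma R_poly_0[simp]: "R_poly 0"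
  and R_poly_add: "R_poly p \<Longrightarrow> R_poly q \<Longrightarrow> R_poly (p + q)"
  and R_poly_diff: "R_poly p \<Longrightarrow> R_poly q \<Longrightarrow> R_poly (p - q)"
  and R_poly_smult: "r \<in> R \<Longrightarrow> R_poly p \<Longrightarrow> R_poly (smult r p)"
  and R_poly_monom: "r \<in> R \<Longrightarrow> R_poly (monom r n)"
  and R_poly_const: "r \<in> R \<Longrightarrow> R_poly [:r:]"
  by (simp_all add: R_poly_def coeff_monom coeff_pCons split: nat.split)

lemma R_poly_mult: "R_poly p \<Longrightarrow> R_poly q \<Longrightarrow> R_poly (p * q)"
  by (simp add: R_poly_def coeff_mult sum_mem)

lemma zero_mod_m_0[simp]: "zero_mod_m 0"
  and zero_mod_m_add: "zero_mod_m p \<Longrightarrow> zero_mod_m q \<Longrightarrow> zero_mod_m (p + q)"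
  and zero_mod_m_diff: "zero_mod_m p \<Longrightarrow> zero_mod_m q \<Longrightarrow> zero_mod_m (p - q)"
  and zero_mod_m_uminus: "zero_mod_m p \<Longrightarrow> zero_mod_m (- p)"
  by (simp_all add: zero_mod_m_def add_mem_max_ideal diff_mem_max_ideal uminus_mem_max_ideal)

lemma zero_mod_m_mult: "zero_mod_m p \<Longrightarrow> R_poly q \<Longrightarrow> zero_mod_m (p * q)"
  unfolding zero_mod_m_def R_poly_def coeff_mult by (auto intro!: sum_mem_max_ideal mult_mem_max_ideal)

lemma zero_mod_m_mult_left: "zero_mod_m p \<Longrightarrow> R_poly q \<Longrightarrow> zero_mod_m (q * p)"
  using zero_mod_m_mult by (simp add: mult.commute)

lemma R_poly_truncate:
  assumes "R_poly p" "\<not> zero_mod_m p"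
  obtains p' where "R_poly p'" "zero_mod_m (p - p')" "degree p' \<le> degree p"
    "lead_coeff p' \<notin> max_ideal"
proof -
  define A where "A = {i. coeff p i \<notin> max_ideal}"
  have A_bound: "A \<subseteq> {..degree p}"
    using le_degree by (force simp: A_def)
  then have fin: "finite A"
    using finite_subset by blast
  moreover have "A \<noteq> {}"
    using assms(2) by (auto simp: A_def zero_mod_m_def)
  ultimately have "Max A \<in> A"
    by (rule Max_in)
  moreover have "coeff p i \<in> max_ideal" if "Max A < i" for i
    using Max_ge[OF fin, of i] that by (auto simp: A_def)
  ultimately have k: "Max A \<in> A" "\<And>i. Max A < i \<Longrightarrow> coeff p i \<in> max_ideal"
    by blast+
  define p' where "p' = poly_cutoff (Suc (Max A)) p"
  have coeff_p': "coeff p' i = (if i \<le> Max A then coeff p i else 0)" for i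
    by (simp add: p'_def coeff_poly_cutoff)
  have deg: "degree p' = Max A"
    using k(1) by (intro antisym degree_le le_degree) (auto simp: coeff_p' A_def)
  show ?thesis
  proof (rule that)
    show "R_poly p'"
      using assms(1) by (simp add: R_poly_def coeff_p')
    show "zero_mod_m (p - p')"
      using k(2) by (simp add: zero_mod_m_def coeff_p')
    show "degree p' \<le> degree p"
      using deg k(1) A_bound by auto
    show "lead_coeff p' \<notin> max_ideal"
      using deg k(1) by (simp add: coeff_p' A_def)
  qed
qed

lemma R_poly_div_step:
  assumes d: "R_poly d" "v \<in> R" "lead_coeff d * v = 1" and p: "R_poly p" "degree d \<le> degree p"
  defines "c \<equiv> monom (lead_coeff p * v) (degree p - degree d)"
  shows "R_poly c" "p - c * d = 0 \<or> degree (p - c * d) < degree p"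
proof -
  show "R_poly c"
    using d p by (simp add: c_def R_poly_def R_poly_monom)
  have "coeff (p - c * d) n = 0" if "degree p \<le> n" for n
  proof (cases "n = degree p")
    case True
    then have "coeff (c * d) n = lead_coeff p * (lead_coeff d * v)"
      using p(2) by (simp add: c_def coeff_monom_mult)
    then show ?thesis
      using True d(3) by simp
  next
    case False
    then show ?thesis
      using that p(2) by (simp add: c_def coeff_monom_mult coeff_eq_0)
  qed
  then show "p - c * d = 0 \<or> degree (p - c * d) < degree p"
    using degree_lessI[of "p - c * d" "degree p"] by blast
qed

lemma R_poly_div:
  assumes d: "R_poly d" "v \<in> R" "lead_coeff d * v = 1" and "R_poly p"
  obtains q r where "R_poly q" "R_poly r" "p = q * d + r" "r = 0 \<or> degree r < degree d"
  using \<open>R_poly p\<close>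
proof (induction "degree p" arbitrary: p thesis rule: less_induct)
  case less
  show ?case
  proof (cases "degree p < degree d")
    case True
    then show ?thesis
      using less.prems by (intro less.prems(1)[of 0 p]) auto
  next
    case False
    define c where "c = monom (lead_coeff p * v) (degree p - degree d)"
    have c: "R_poly c" "p - c * d = 0 \<or> degree (p - c * d) < degree p"
      using R_poly_div_step[OF d less.prems(2)] False unfolding c_def by simp_all
    have p': "R_poly (p - c * d)"
      using c(1) d(1) less.prems(2) by (simp add: R_poly_diff R_poly_mult)
    from c(2) show ?thesis
    proof
      assume "p - c * d = 0"
      then show ?thesis
        using c(1) by (intro less.prems(1)[of c 0]) simp_all
    next
      assume "degree (p - c * d) < degree p"
      then obtain q r where "R_poly q" "R_poly r" "p - c * d = q * d + r" "r = 0 \<or> degree r < degree d"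
        using less.hyps p' by blast
      then show ?thesis
        using c(1) by (intro less.prems(1)[of "q + c" r]) (simp_all add: R_poly_add algebra_simps)
    qed
  qed
qed

end

section \<open>The local ring \<open>S = R[\<theta>]\<close>\<close>

definition R_indep :: "'a::comm_ring_1 set \<Rightarrow> (nat \<Rightarrow> 'a) \<Rightarrow> nat \<Rightarrow> bool" where
  "R_indep R g c \<longleftrightarrow> (\<forall>x. (\<forall>j<c. x j \<in> R) \<and> (\<Sum>j<c. x j * g j) = 0 \<longrightarrow> (\<forall>j<c. x j = 0))"

locale chain_extension = finite_chain_subring R for R :: "'a::{comm_ring_1,finite} set" +
  fixes \<theta> :: 'a and h :: "'a poly" and m :: nat
  assumes m_pos: "m \<ge> 1" and h_monic: "lead_coeff h = 1" and degree_h: "degree h = m"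
    and h_coeffs: "set (coeffs h) \<subseteq> R" and h_root: "poly h \<theta> = 0"
    and unique_rep: "\<forall>s. \<exists>!p. set (coeffs p) \<subseteq> R \<and> degree p < m \<and> poly p \<theta> = s"
    and h_irreducible_mod_m: "\<not> (\<exists>f g. lead_coeff f = 1 \<and> lead_coeff g = 1 \<and> degree f \<ge> 1 \<and> degree g \<ge> 1 \<and>
               set (coeffs f) \<subseteq> R \<and> set (coeffs g) \<subseteq> R \<and>
               (\<forall>i. coeff (h - f * g) i \<in> nonunits R))"
begin

lemma R_poly_h: "R_poly h"
  using h_coeffs coeffs_subset_iff_R_poly by simp

lemma rep_exists:
  obtains p where "R_poly p" "degree p < m" "poly p \<theta> = s"
  using unique_rep coeffs_subset_iff_R_poly by blast

lemma rep_unique: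
  "R_poly p \<Longrightarrow> degree p < m \<Longrightarrow> R_poly q \<Longrightarrow> degree q < m \<Longrightarrow> poly p \<theta> = poly q \<theta> \<Longrightarrow> p = q"
  using unique_rep coeffs_subset_iff_R_poly by metis

lemma not_zero_mod_m_h: "\<not> zero_mod_m h"
proof
  assume "zero_mod_m h"
  then have "coeff h m \<in> max_ideal"
    by (simp add: zero_mod_m_def)
  then show False
    using h_monic degree_h one_not_mem_max_ideal by simp
qed

lemma root_imp_h_dvd:
  assumes "R_poly f" "poly f \<theta> = 0"
  obtains q where "R_poly q" "f = q * h"
proof -
  obtain q r where qr: "R_poly q" "R_poly r" "f = q * h + r" "r = 0 \<or> degree r < degree h"
    using R_poly_div[OF R_poly_h one_mem _ assms(1)] h_monic by auto
  have "r = 0"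
    using rep_unique[of r 0] qr assms(2) h_root degree_h m_pos by auto
  then show ?thesis
    using qr that by simp
qed

lemma \<pi>_dvd_iff_zero_mod_m:
  assumes "R_poly p" "degree p < m"
  shows "(\<exists>s. poly p \<theta> = \<pi> * s) \<longleftrightarrow> zero_mod_m p"
proof
  assume "\<exists>s. poly p \<theta> = \<pi> * s"
  then obtain s where s: "poly p \<theta> = \<pi> * s" ..
  obtain q where q: "R_poly q" "degree q < m" "poly q \<theta> = s"
    by (rule rep_exists)
  have "p = smult \<pi> q"
    using assms q s degree_smult_le[of \<pi> q] \<pi>_mem
    by (intro rep_unique) (simp_all add: R_poly_smult)
  then show "zero_mod_m p"
    using q(1) \<pi>_generates(1) mult_mem_max_ideal by (simp add: zero_mod_m_def R_poly_def)
next
  assume "zero_mod_m p"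
  then have "\<forall>i. \<exists>r. coeff p i = \<pi> * r"
    unfolding zero_mod_m_def mem_max_ideal_iff_\<pi> by blast
  then obtain r where r: "\<And>i. coeff p i = \<pi> * r i"
    by metis
  have "poly p \<theta> = \<pi> * (\<Sum>i\<le>degree p. r i * \<theta> ^ i)"
    by (simp add: poly_altdef r sum_distrib_left mult.assoc)
  then show "\<exists>s. poly p \<theta> = \<pi> * s" ..
qed

lemma zero_mod_m_reduced:
  assumes "R_poly g" "degree g < m" "R_poly q" "zero_mod_m (g - q * h)"
  shows "zero_mod_m g"
proof (cases "zero_mod_m q")
  case True
  then show ?thesis
    using zero_mod_m_add[OF assms(4) zero_mod_m_mult[OF True R_poly_h]] by simp
next
  case False
  then obtain q' where q': "R_poly q'" "zero_mod_m (q - q')" "lead_coeff q' \<notin> max_ideal"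
    using R_poly_truncate[OF assms(3)] by metis
  have "zero_mod_m ((g - q * h) + (q - q') * h)"
    using assms(4) q'(2) R_poly_h by (intro zero_mod_m_add zero_mod_m_mult)
  then have "coeff (g - q' * h) (degree q' + m) \<in> max_ideal"
    by (simp add: algebra_simps zero_mod_m_def)
  moreover have "coeff (g - q' * h) (degree q' + m) = - lead_coeff q'"
    using assms(2) coeff_mult_degree_sum[of q' h] h_monic degree_h by (simp add: coeff_eq_0)
  ultimately show ?thesis
    using q'(3) uminus_mem_max_ideal by fastforce
qed

lemma factor_mod_m_degree:
  assumes f: "lead_coeff f = 1" and w: "lead_coeff w \<notin> max_ideal" and hw: "zero_mod_m (h - w * f)"
  shows "degree w + degree f = m" "1 - lead_coeff w \<in> max_ideal"
proof -
  have top: "coeff (w * f) (degree w + degree f) = lead_coeff w"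
    using coeff_mult_degree_sum[of w f] f by simp
  have "\<not> degree w + degree f < m"
  proof
    assume "degree w + degree f < m"
    then have "coeff (h - w * f) m = 1"
      using degree_mult_le[of w f] h_monic degree_h by (simp add: coeff_eq_0)
    then show False
      using hw one_not_mem_max_ideal by (metis zero_mod_m_def)
  qed
  moreover have "\<not> m < degree w + degree f"
  proof
    assume "m < degree w + degree f"
    then have "coeff (h - w * f) (degree w + degree f) = - lead_coeff w"
      using top degree_h by (simp add: coeff_eq_0)
    then show False
      using hw w uminus_mem_max_ideal by (metis minus_minus zero_mod_m_def)
  qed
  ultimately show "degree w + degree f = m"
    by linarith
  then show "1 - lead_coeff w \<in> max_ideal"
    using hw top h_monic degree_h unfolding zero_mod_m_def by (metis coeff_diff)
qed

lemma monic_factor_mod_m: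
  assumes f: "R_poly f" "lead_coeff f = 1" and w: "R_poly w" "zero_mod_m (h - w * f)"
  obtains g where "R_poly g" "lead_coeff g = 1" "degree f + degree g = m" "zero_mod_m (h - f * g)"
proof -
  have "\<not> zero_mod_m w"
    using zero_mod_m_add[OF w(2) zero_mod_m_mult] f(1) not_zero_mod_m_h by force
  then obtain w' where w': "R_poly w'" "zero_mod_m (w - w')" "lead_coeff w' \<notin> max_ideal"
    using R_poly_truncate[OF w(1)] by metis
  have "zero_mod_m ((h - w * f) + (w - w') * f)"
    using w(2) w'(2) f(1) by (intro zero_mod_m_add zero_mod_m_mult)
  then have hw': "zero_mod_m (h - w' * f)"
    by (simp add: algebra_simps)
  note deg = factor_mod_m_degree[OF f(2) w'(3) hw']
  define g where "g = w' + monom (1 - lead_coeff w') (degree w')"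
  have coeff_g: "coeff g i = (if i = degree w' then 1 else coeff w' i)" for i
    by (simp add: g_def coeff_monom)
  have "degree g = degree w'"
    by (intro antisym degree_le le_degree) (auto simp: coeff_g coeff_eq_0)
  moreover have "zero_mod_m (g - w')"
    using deg(2) by (simp add: g_def zero_mod_m_def coeff_monom)
  then have "zero_mod_m ((h - w' * f) - (g - w') * f)"
    using hw' f(1) by (simp add: zero_mod_m_diff zero_mod_m_mult)
  moreover have "R_poly g"
    using w'(1) by (simp add: R_poly_def coeff_g)
  ultimately show ?thesis
    using deg(1) coeff_g by (intro that) (simp_all add: algebra_simps)
qed

lemma no_proper_factor_mod_m:
  assumes p: "R_poly p" "lead_coeff p \<notin> max_ideal" "1 \<le> degree p" "degree p < m"
    and u: "R_poly u" "zero_mod_m (h - u * p)"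
  shows False
proof -
  obtain v where v: "v \<in> R" "lead_coeff p * v = 1"
    using inverse_in_R p(1,2) by (auto simp: R_poly_def)
  define f where "f = smult v p"
  have "coeff f (degree p) = 1"
    using v by (simp add: f_def mult.commute)
  moreover have "degree f \<le> degree p"
    by (simp add: f_def degree_smult_le)
  ultimately have f: "degree f = degree p" "lead_coeff f = 1"
    using le_degree[of f "degree p"] by auto
  have "smult (lead_coeff p) u * f = u * p"
    using v by (simp add: f_def mult.commute)
  then have "zero_mod_m (h - smult (lead_coeff p) u * f)"
    using u(2) by simp
  moreover have "R_poly f" "R_poly (smult (lead_coeff p) u)"
    using p(1) u(1) v(1) by (simp_all add: f_def R_poly_smult) (simp add: R_poly_def)
  ultimately obtain g where g: "R_poly g" "lead_coeff g = 1" "degree f + degree g = m"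
    and fg: "zero_mod_m (h - f * g)"
    using monic_factor_mod_m f(2) by metis
  have "1 \<le> degree f" "1 \<le> degree g"
    using f(1) g(3) p(3,4) by linarith+
  moreover have "set (coeffs f) \<subseteq> R" "set (coeffs g) \<subseteq> R"
    using \<open>R_poly f\<close> g(1) by (simp_all add: coeffs_subset_iff_R_poly)
  ultimately show False
    using h_irreducible_mod_m f(2) g(2) fg unfolding zero_mod_m_def by blast
qed

lemma zero_mod_m_cancel_const:
  assumes v: "v \<in> R" "lead_coeff p * v = 1" and "degree p = 0"
    and "R_poly g" "degree g < m" "R_poly q" "zero_mod_m (p * g - q * h)"
  shows "zero_mod_m g"
proof -
  have p: "p = [:lead_coeff p:]"
    using \<open>degree p = 0\<close> by (metis degree_eq_zeroE coeff_pCons_0)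
  have pv: "p * [:v:] = 1"
    using v by (subst p) (simp add: one_pCons mult.commute)
  have "(p * g - q * h) * [:v:] = g * (p * [:v:]) - (q * [:v:]) * h"
    by (simp only: algebra_simps)
  then have "zero_mod_m (g - (q * [:v:]) * h)"
    using zero_mod_m_mult[OF assms(7) R_poly_const[OF v(1)]] by (simp only: pv mult_1_right)
  then show ?thesis
    by (rule zero_mod_m_reduced[OF assms(4,5) R_poly_mult[OF assms(6) R_poly_const[OF v(1)]]])
qed

text \<open>Euclid's argument in \<open>(R/\<mm>)[x]\<close>: the remainder of \<open>h\<close> modulo \<open>p\<close> is nonzero modulo \<open>\<mm>\<close>,
  as \<open>h\<close> has no proper factor there, and of smaller degree than \<open>p\<close>; it takes over the role of \<open>p\<close>.\<close>
lemma zero_mod_m_cancel: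
  assumes "R_poly p" "lead_coeff p \<notin> max_ideal" "degree p < m" "R_poly g" "degree g < m" "R_poly q"
    and "zero_mod_m (p * g - q * h)"
  shows "zero_mod_m g"
  using assms
proof (induction "degree p" arbitrary: p q rule: less_induct)
  case less
  obtain v where v: "v \<in> R" "lead_coeff p * v = 1"
    using inverse_in_R less.prems(1,2) by (auto simp: R_poly_def)
  show ?case
  proof (cases "degree p = 0")
    case True
    then show ?thesis
      using zero_mod_m_cancel_const v less.prems(4-7) by blast
  next
    case False
    obtain u r where ur: "R_poly u" "R_poly r" "h = u * p + r" "r = 0 \<or> degree r < degree p"
      using R_poly_div[OF less.prems(1) v R_poly_h] by blast
    have "r * g - (g - u * q) * h = - (u * (p * g - q * h))"
      using ur(3) by (simp add: algebra_simps)
    then have rg: "zero_mod_m (r * g - (g - u * q) * h)"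
      using zero_mod_m_uminus[OF zero_mod_m_mult_left[OF less.prems(7) ur(1)]] by simp
    show ?thesis
    proof (cases "zero_mod_m r")
      case True
      then have "zero_mod_m (h - u * p)"
        using ur(3) by simp
      with no_proper_factor_mod_m[OF less.prems(1,2) _ less.prems(3) ur(1)] False show ?thesis
        by simp
    next
      case nonzero: False
      then obtain r' where r': "R_poly r'" "zero_mod_m (r - r')" "degree r' \<le> degree r"
        "lead_coeff r' \<notin> max_ideal"
        using R_poly_truncate[OF ur(2)] by metis
      have "zero_mod_m ((r * g - (g - u * q) * h) - (r - r') * g)"
        using rg r'(2) less.prems(4) by (simp add: zero_mod_m_diff zero_mod_m_mult)
      then have "zero_mod_m (r' * g - (g - u * q) * h)"
        by (simp add: algebra_simps)
      moreover have "degree r' < degree p"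
        using nonzero ur(4) r'(3) by auto
      moreover have "R_poly (g - u * q)"
        using less.prems(4,6) ur(1) by (simp add: R_poly_diff R_poly_mult)
      ultimately show ?thesis
        using less.hyps r'(1,4) less.prems(3-5) by simp
    qed
  qed
qed

lemma \<pi>_prime:
  assumes "\<not> \<pi> dvd y" "\<not> \<pi> dvd z"
  shows "\<not> \<pi> dvd (y * z)"
proof
  assume "\<pi> dvd (y * z)"
  then obtain s where s: "y * z = \<pi> * s" ..
  obtain p where p: "R_poly p" "degree p < m" "poly p \<theta> = y"
    by (rule rep_exists)
  obtain g where g: "R_poly g" "degree g < m" "poly g \<theta> = z"
    by (rule rep_exists)
  obtain r where r: "R_poly r" "poly r \<theta> = s"
    by (rule rep_exists)
  have "R_poly (p * g - smult \<pi> r)" "poly (p * g - smult \<pi> r) \<theta> = 0"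
    using p g r s \<pi>_mem by (simp_all add: R_poly_diff R_poly_mult R_poly_smult)
  then obtain q where q: "R_poly q" "p * g - smult \<pi> r = q * h"
    by (rule root_imp_h_dvd)
  have "zero_mod_m (smult \<pi> r)"
    using r(1) \<pi>_generates(1) mult_mem_max_ideal by (simp add: zero_mod_m_def R_poly_def)
  then have pg: "zero_mod_m (p * g - q * h)"
    using q(2) by (simp add: algebra_simps)
  have "\<not> zero_mod_m p"
    using \<pi>_dvd_iff_zero_mod_m[OF p(1,2)] assms(1) p(3) by (auto simp: dvd_def)
  then obtain p' where p': "R_poly p'" "zero_mod_m (p - p')" "degree p' \<le> degree p"
    "lead_coeff p' \<notin> max_ideal"
    using R_poly_truncate[OF p(1)] by metis
  have "zero_mod_m ((p * g - q * h) - (p - p') * g)"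
    using pg p'(2) g(1) by (simp add: zero_mod_m_diff zero_mod_m_mult)
  then have "zero_mod_m g"
    using zero_mod_m_cancel[OF p'(1,4) _ g(1,2) q(1)] p'(3) p(2) by (simp add: algebra_simps)
  then show False
    using \<pi>_dvd_iff_zero_mod_m[OF g(1,2)] assms(2) g(3) by (auto simp: dvd_def)
qed

lemma \<pi>_dvd_imp_not_unit: "\<pi> dvd y \<Longrightarrow> \<not> y dvd 1"
proof
  assume "\<pi> dvd y" "y dvd 1"
  then have "\<pi> dvd 1"
    by (rule dvd_trans)
  moreover obtain N where "\<pi> ^ N = 0"
    using \<pi>_nilpotent ..
  ultimately have "(0::'a) dvd 1"
    using dvd_power_same[of \<pi> 1 N] by simp
  then show False
    using zero_neq_one by simp
qed

lemma one_minus_\<pi>_mult_unit: "(1 - \<pi> * s) dvd 1"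
proof -
  obtain N where "\<pi> ^ N = 0"
    using \<pi>_nilpotent ..
  then have "(1 - \<pi> * s) * (\<Sum>i<N. (\<pi> * s) ^ i) = 1"
    using one_diff_power_eq[of "\<pi> * s" N] by (simp add: power_mult_distrib)
  then show ?thesis
    by (metis dvd_triv_left)
qed

text \<open>As \<open>\<pi>S\<close> is prime and \<open>y\<^sup>i = y\<^sup>j\<close> for some \<open>i < j\<close>, an element \<open>y \<notin> \<pi>S\<close> has
  \<open>1 - y\<^sup>j\<^sup>-\<^sup>i \<in> \<pi>S\<close>, so \<open>y\<^sup>j\<^sup>-\<^sup>i\<close> is a unit.\<close>
lemma not_\<pi>_dvd_imp_unit:
  assumes y: "\<not> \<pi> dvd y"
  shows "y dvd 1"
proof -
  obtain i j where ij: "i < j" "y ^ i = y ^ j"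
    using power_repeats by blast
  define k where "k = j - i"
  have powers: "\<not> \<pi> dvd y ^ n" for n
  proof (induction n)
    case (Suc n)
    then show ?case
      using \<pi>_prime[OF Suc y] by (simp add: mult.commute)
  qed (use \<pi>_dvd_imp_not_unit in auto)
  have "y ^ i * y ^ k = y ^ j"
    using ij(1) by (simp add: k_def flip: power_add)
  then have "y ^ i * (1 - y ^ k) = 0"
    using ij(2) by (simp add: right_diff_distrib)
  then have "\<pi> dvd y ^ i * (1 - y ^ k)"
    by simp
  then obtain s where "1 - y ^ k = \<pi> * s"
    using \<pi>_prime[OF powers[of i]] by (auto elim: dvdE)
  then have "y ^ k = 1 - \<pi> * s"
    by (simp add: algebra_simps)
  then have "y ^ k dvd 1"
    using one_minus_\<pi>_mult_unit by simp
  moreover have "y dvd y ^ k"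
    using ij(1) by (simp add: k_def dvd_power)
  ultimately show ?thesis
    by (blast intro: dvd_trans)
qed

lemma not_unit_iff_\<pi>_dvd: "\<not> y dvd 1 \<longleftrightarrow> \<pi> dvd y"
  using not_\<pi>_dvd_imp_unit \<pi>_dvd_imp_not_unit by blast

lemma unit_times_\<pi>_power:
  assumes "y \<noteq> 0"
  obtains v u where "y = \<pi> ^ v * u" "u dvd 1" "\<pi> ^ v \<noteq> 0"
proof -
  obtain N where N: "\<pi> ^ N = 0"
    using \<pi>_nilpotent ..
  define A where "A = {v. \<exists>u. y = \<pi> ^ v * u}"
  have "v < N" if "v \<in> A" for v
  proof (rule ccontr)
    assume "\<not> v < N"
    then have "\<pi> ^ v = 0"
      using N by (metis le_iff_add not_less power_add mult_zero_left)
    then show False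
      using that assms by (auto simp: A_def)
  qed
  then have fin: "finite A"
    by (meson finite_nat_set_iff_bounded)
  have "0 \<in> A"
    by (simp add: A_def)
  then have "Max A \<in> A"
    using fin by (intro Max_in) auto
  then obtain u where u: "y = \<pi> ^ Max A * u"
    by (auto simp: A_def)
  have "u dvd 1"
  proof (rule ccontr)
    assume "\<not> u dvd 1"
    then obtain s where "u = \<pi> * s"
      using not_unit_iff_\<pi>_dvd by (auto elim: dvdE)
    then have "y = \<pi> ^ Suc (Max A) * s"
      using u by (simp add: ac_simps)
    then have "Suc (Max A) \<in> A"
      by (auto simp: A_def)
    then show False
      using Max_ge[OF fin] by fastforce
  qed
  moreover have "\<pi> ^ Max A \<noteq> 0"
    using u assms by auto
  ultimately show ?thesis
    using u that by blast
qed

lemma nonunit_annihilated: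
  assumes "\<not> \<beta> dvd 1"
  obtains r where "r \<in> R" "r \<noteq> 0" "r * \<beta> = 0"
proof -
  obtain s where s: "\<beta> = \<pi> * s"
    using assms not_unit_iff_\<pi>_dvd by (auto elim: dvdE)
  define N where "N = (LEAST N. \<pi> ^ N = 0)"
  have N: "\<pi> ^ N = 0"
    unfolding N_def using \<pi>_nilpotent by (rule LeastI_ex)
  then have "N \<noteq> 0"
    using zero_neq_one by (rule_tac ccontr) simp
  then have "\<pi> ^ (N - 1) \<noteq> 0"
    using not_less_Least[of "N - 1" "\<lambda>n. \<pi> ^ n = 0"] by (simp add: N_def)
  moreover have "\<pi> ^ (N - 1) * \<beta> = \<pi> ^ Suc (N - 1) * s"
    using s by (simp add: ac_simps)
  then have "\<pi> ^ (N - 1) * \<beta> = 0"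
    using N \<open>N \<noteq> 0\<close> by simp
  ultimately show ?thesis
    using that power_mem[OF \<pi>_mem] by blast
qed

lemma R_indep_imp_unit:
  assumes "R_indep R g c" "j < c"
  shows "g j dvd 1"
proof (rule ccontr)
  assume "\<not> g j dvd 1"
  then obtain r where r: "r \<in> R" "r \<noteq> 0" "r * g j = 0"
    by (rule nonunit_annihilated)
  define x where "x j' = (if j' = j then r else 0)" for j'
  have "(\<Sum>j'<c. x j' * g j') = (\<Sum>j'<c. if j' = j then r * g j else 0)"
    by (rule sum.cong) (simp_all add: x_def)
  also have "\<dots> = r * g j"
    using assms(2) by simp
  finally have "(\<Sum>j'<c. x j' * g j') = r * g j" .
  moreover have "\<forall>j'<c. x j' \<in> R"
    using r(1) by (simp add: x_def)
  ultimately have "\<forall>j'<c. x j' = 0"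
    using assms(1) r(3) unfolding R_indep_def by simp
  then show False
    using r(2) assms(2) by (auto simp: x_def)
qed

lemma R_basis_powers: "R_basis R m (\<lambda>i. \<theta> ^ i)"
  unfolding R_basis_def
proof
  fix s
  obtain p where p: "R_poly p" "degree p < m" "poly p \<theta> = s"
    by (rule rep_exists)
  have "s = (\<Sum>i\<le>degree p. coeff p i * \<theta> ^ i)"
    using p(3) poly_altdef by metis
  also have "\<dots> = (\<Sum>i<m. coeff p i * \<theta> ^ i)"
    using p(2) by (intro sum.mono_neutral_left) (auto simp: coeff_eq_0)
  finally have "s = (\<Sum>i<m. coeff p i * \<theta> ^ i)" .
  then show "\<exists>!r. (\<forall>i<m. r i \<in> R) \<and> (\<forall>i\<ge>m. r i = 0) \<and> s = (\<Sum>i<m. r i * \<theta> ^ i)"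
  proof (intro ex1I[of _ "coeff p"] conjI allI impI)
    fix r assume r: "(\<forall>i<m. r i \<in> R) \<and> (\<forall>i\<ge>m. r i = 0) \<and> s = (\<Sum>i<m. r i * \<theta> ^ i)"
    define q where "q = (\<Sum>i<m. monom (r i) i)"
    have coeff_q: "coeff q n = r n" for n
      using r by (cases "n < m") (simp_all add: q_def coeff_sum coeff_monom)
    have "R_poly q"
      using r by (simp add: R_poly_def coeff_q) (metis zero_mem not_le)
    moreover have "degree q < m"
      using r m_pos degree_le[of "m - 1" q] by (simp add: coeff_q)
    moreover have "poly q \<theta> = s"
      using r by (simp add: q_def poly_sum poly_monom)
    ultimately have "q = p"
      using p rep_unique by metis
    then show "r = coeff p"
      using coeff_q by auto
  qed (use p in \<open>auto simp: R_poly_def coeff_eq_0\<close>)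
qed

end

section \<open>Smith normal form over a chain ring\<close>

definition mat_id :: "nat \<Rightarrow> nat \<Rightarrow> 'a::comm_ring_1" where
  "mat_id i j = of_bool (i = j)"

lemma mat_mult_id_right: "j < n \<Longrightarrow> mat_mult n A mat_id i j = A i j"
  by (simp add: mat_mult_def mat_id_def)

lemma mat_mult_id_left: "i < n \<Longrightarrow> mat_mult n mat_id A i j = A i j"
  by (simp add: mat_mult_def mat_id_def)

lemma mat_mult_assoc: "mat_mult n (mat_mult m A B) C = mat_mult m A (mat_mult n B C)"
  unfolding mat_mult_def
  by (simp add: sum_distrib_left sum_distrib_right mult.assoc sum.swap[of _ "{..<n}"])

lemma mat_mult_cong:
  "(\<And>l. l < m \<Longrightarrow> A i l = A' i l) \<Longrightarrow> (\<And>l. l < m \<Longrightarrow> B l j = B' l j)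
    \<Longrightarrow> mat_mult m A B i j = mat_mult m A' B' i j"
  unfolding mat_mult_def by simp

definition perm_mat :: "(nat \<Rightarrow> nat) \<Rightarrow> nat \<Rightarrow> nat \<Rightarrow> 'a::comm_ring_1" where
  "perm_mat f i j = of_bool (j = f i)"

lemma perm_mat_mult: "f i < d \<Longrightarrow> mat_mult d (perm_mat f) A i j = A (f i) j"
  by (simp add: mat_mult_def perm_mat_def)

lemma mult_perm_mat_transpose:
  assumes "transpose a b j < d"
  shows "mat_mult d A (perm_mat (transpose a b)) i j = A i (transpose a b j)"
proof -
  have "{l. j = transpose a b l} = {transpose a b j}"
    by (auto simp: transpose_eq_iff)
  then show ?thesis
    using assms by (simp add: mat_mult_def perm_mat_def)
qed

definition row_op_mat :: "(nat \<Rightarrow> 'a) \<Rightarrow> nat \<Rightarrow> nat \<Rightarrow> nat \<Rightarrow> 'a::comm_ring_1" where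
  "row_op_mat r t i j = mat_id i j + of_bool (j = t \<and> t < i) * r i"

definition col_op_mat :: "(nat \<Rightarrow> 'a) \<Rightarrow> nat \<Rightarrow> nat \<Rightarrow> nat \<Rightarrow> 'a::comm_ring_1" where
  "col_op_mat r t i j = mat_id i j + r j * of_bool (i = t \<and> t < j)"

lemma row_op_mat_mult:
  "t < d \<Longrightarrow> i < d \<Longrightarrow> mat_mult d (row_op_mat r t) A i j = A i j + (if t < i then r i * A t j else 0)"
  by (simp add: mat_mult_def row_op_mat_def mat_id_def ring_distribs sum.distrib mult.assoc)

lemma mult_col_op_mat:
  "t < d \<Longrightarrow> j < d \<Longrightarrow> mat_mult d A (col_op_mat r t) i j = A i j + (if t < j then A i t * r j else 0)"
  by (simp add: mat_mult_def col_op_mat_def mat_id_def ring_distribs sum.distrib mult.assoc[symmetric])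

context finite_chain_subring
begin

definition R_mat :: "nat \<Rightarrow> nat \<Rightarrow> (nat \<Rightarrow> nat \<Rightarrow> 'a) \<Rightarrow> bool" where
  "R_mat d1 d2 A \<longleftrightarrow> (\<forall>i<d1. \<forall>j<d2. A i j \<in> R)"

lemma R_mat_mult: "R_mat d1 m A \<Longrightarrow> R_mat m d2 B \<Longrightarrow> R_mat d1 d2 (mat_mult m A B)"
  unfolding R_mat_def mat_mult_def by (auto intro!: sum_mem)

lemma R_invertible_iff:
  "R_invertible R d P \<longleftrightarrow> R_mat d d P \<and> (\<exists>P'. R_mat d d P' \<and>
     (\<forall>i<d. \<forall>j<d. mat_mult d P P' i j = mat_id i j) \<and> (\<forall>i<d. \<forall>j<d. mat_mult d P' P i j = mat_id i j))"
  by (simp add: R_invertible_def R_mat_def mat_id_def)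

lemma R_invertible_id: "R_invertible R d mat_id"
  unfolding R_invertible_iff
  by (intro conjI exI[of _ mat_id]) (auto simp: R_mat_def mat_id_def mat_mult_id_left)

lemma R_invertible_mult:
  assumes "R_invertible R d P" "R_invertible R d P'"
  shows "R_invertible R d (mat_mult d P P')"
proof -
  obtain Pi where Pi: "R_mat d d Pi" "\<forall>i<d. \<forall>j<d. mat_mult d P Pi i j = mat_id i j"
    "\<forall>i<d. \<forall>j<d. mat_mult d Pi P i j = mat_id i j"
    using assms(1) unfolding R_invertible_iff by blast
  obtain Pi' where Pi': "R_mat d d Pi'" "\<forall>i<d. \<forall>j<d. mat_mult d P' Pi' i j = mat_id i j"
    "\<forall>i<d. \<forall>j<d. mat_mult d Pi' P' i j = mat_id i j"
    using assms(2) unfolding R_invertible_iff by blast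
  have inverse: "mat_mult d (mat_mult d X Y) (mat_mult d Y' X') i j = mat_id i j"
    if "\<forall>i<d. \<forall>j<d. mat_mult d X X' i j = mat_id i j" "\<forall>i<d. \<forall>j<d. mat_mult d Y Y' i j = mat_id i j"
      "i < d" "j < d" for X Y X' Y' i j
  proof -
    have "mat_mult d (mat_mult d X Y) (mat_mult d Y' X') i j = mat_mult d X (mat_mult d (mat_mult d Y Y') X') i j"
      by (simp add: mat_mult_assoc)
    also have "\<dots> = mat_mult d X (mat_mult d mat_id X') i j"
      using that(2) by (intro mat_mult_cong refl) simp
    also have "\<dots> = mat_mult d X X' i j"
      by (intro mat_mult_cong refl) (simp add: mat_mult_id_left)
    finally show ?thesis
      using that(1,3,4) by simp
  qed
  show ?thesis
    using assms Pi Pi' inverse[of P Pi P' Pi'] inverse[of Pi' P' Pi P]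
    unfolding R_invertible_iff by (intro conjI exI[of _ "mat_mult d Pi' Pi"]) (simp_all add: R_mat_mult)
qed

lemma R_invertible_perm_mat_transpose: "a < d \<Longrightarrow> b < d \<Longrightarrow> R_invertible R d (perm_mat (transpose a b))"
  unfolding R_invertible_iff
  by (intro conjI exI[of _ "perm_mat (transpose a b)"])
    (auto simp: R_mat_def perm_mat_def mat_id_def perm_mat_mult transpose_def)

lemma R_invertible_row_op_mat: "t < d \<Longrightarrow> \<forall>i. r i \<in> R \<Longrightarrow> R_invertible R d (row_op_mat r t)"
  unfolding R_invertible_iff
  by (intro conjI exI[of _ "row_op_mat (\<lambda>i. - r i) t"])
    (auto simp: R_mat_def row_op_mat_mult row_op_mat_def mat_id_def)

lemma R_invertible_col_op_mat: "t < d \<Longrightarrow> \<forall>j. r j \<in> R \<Longrightarrow> R_invertible R d (col_op_mat r t)"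
  unfolding R_invertible_iff
  by (intro conjI exI[of _ "col_op_mat (\<lambda>j. - r j) t"])
    (auto simp: R_mat_def mult_col_op_mat col_op_mat_def mat_id_def)

definition R_equiv :: "nat \<Rightarrow> nat \<Rightarrow> (nat \<Rightarrow> nat \<Rightarrow> 'a) \<Rightarrow> (nat \<Rightarrow> nat \<Rightarrow> 'a) \<Rightarrow> bool" where
  "R_equiv d1 d2 A B \<longleftrightarrow> (\<exists>P Q. R_invertible R d1 P \<and> R_invertible R d2 Q \<and>
      (\<forall>i<d1. \<forall>j<d2. B i j = mat_mult d2 (mat_mult d1 P A) Q i j))"

lemma R_equiv_refl: "R_equiv d1 d2 A A"
  unfolding R_equiv_def
  by (intro exI[of _ mat_id] conjI R_invertible_id allI impI) (simp add: mat_mult_id_right mat_mult_id_left)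

lemma R_equiv_cong: "R_equiv d1 d2 A B \<Longrightarrow> (\<And>i j. i < d1 \<Longrightarrow> j < d2 \<Longrightarrow> B i j = C i j) \<Longrightarrow> R_equiv d1 d2 A C"
  unfolding R_equiv_def by metis

lemma R_equiv_trans:
  assumes "R_equiv d1 d2 A B" "R_equiv d1 d2 B C"
  shows "R_equiv d1 d2 A C"
proof -
  obtain P Q where PQ: "R_invertible R d1 P" "R_invertible R d2 Q"
    and B: "\<And>i j. i < d1 \<Longrightarrow> j < d2 \<Longrightarrow> B i j = mat_mult d2 (mat_mult d1 P A) Q i j"
    using assms(1) unfolding R_equiv_def by blast
  obtain P' Q' where PQ': "R_invertible R d1 P'" "R_invertible R d2 Q'"
    and C: "\<And>i j. i < d1 \<Longrightarrow> j < d2 \<Longrightarrow> C i j = mat_mult d2 (mat_mult d1 P' B) Q' i j"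
    using assms(2) unfolding R_equiv_def by blast
  have "C i j = mat_mult d2 (mat_mult d1 (mat_mult d1 P' P) A) (mat_mult d2 Q Q') i j"
    if "i < d1" "j < d2" for i j
  proof -
    have "C i j = mat_mult d2 (mat_mult d1 P' (mat_mult d2 (mat_mult d1 P A) Q)) Q' i j"
      using that by (simp add: C B cong: mat_mult_cong)
    then show ?thesis
      by (simp only: mat_mult_assoc)
  qed
  then show ?thesis
    using PQ PQ' R_invertible_mult unfolding R_equiv_def by blast
qed

lemma R_equiv_transpose:
  assumes "a < d1" "b < d1" "c < d2" "e < d2"
  shows "R_equiv d1 d2 A (\<lambda>i j. A (transpose a b i) (transpose c e j))"
  unfolding R_equiv_def
proof (intro exI conjI)
  show "R_invertible R d1 (perm_mat (transpose a b))" "R_invertible R d2 (perm_mat (transpose c e))"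
    using R_invertible_perm_mat_transpose assms by auto
  show "\<forall>i<d1. \<forall>j<d2. A (transpose a b i) (transpose c e j)
      = mat_mult d2 (mat_mult d1 (perm_mat (transpose a b)) A) (perm_mat (transpose c e)) i j"
    using assms by (auto simp: mult_perm_mat_transpose perm_mat_mult transpose_def)
qed

lemma R_equiv_row_op:
  assumes "t < d1" "\<forall>i. r i \<in> R"
  shows "R_equiv d1 d2 A (\<lambda>i j. A i j + (if t < i then r i * A t j else 0))"
  unfolding R_equiv_def
  by (intro exI[of _ "row_op_mat r t"] exI[of _ mat_id] conjI R_invertible_row_op_mat R_invertible_id assms allI impI)
    (simp add: mat_mult_id_right row_op_mat_mult assms)

lemma R_equiv_col_op:
  assumes "t < d2" "\<forall>j. r j \<in> R"
  shows "R_equiv d1 d2 A (\<lambda>i j. A i j + (if t < j then A i t * r j else 0))"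
  unfolding R_equiv_def
  by (intro exI[of _ mat_id] exI[of _ "col_op_mat r t"] conjI R_invertible_col_op_mat R_invertible_id assms allI impI)
    (simp add: mult_col_op_mat mat_mult_id_left assms cong: mat_mult_cong)

definition partial_snf :: "nat \<Rightarrow> nat \<Rightarrow> nat \<Rightarrow> (nat \<Rightarrow> nat \<Rightarrow> 'a) \<Rightarrow> bool" where
  "partial_snf d1 d2 t A \<longleftrightarrow>
    (\<forall>i<d1. \<forall>j<d2. (i < t \<or> j < t) \<and> i \<noteq> j \<longrightarrow> A i j = 0) \<and>
    (\<forall>i. Suc i < t \<longrightarrow> (\<exists>x\<in>R. A (Suc i) (Suc i) = x * A i i)) \<and>
    (0 < t \<longrightarrow> (\<forall>i<d1. \<forall>j<d2. t \<le> i \<and> t \<le> j \<longrightarrow> (\<exists>x\<in>R. A i j = x * A (t - 1) (t - 1))))"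

lemma partial_snf_transpose:
  assumes A: "partial_snf d1 d2 t A" and pq: "t \<le> p" "p < d1" "t \<le> q" "q < d2"
  shows "partial_snf d1 d2 t (\<lambda>i j. A (transpose t p i) (transpose t q j))"
proof -
  have tp: "i < t \<Longrightarrow> transpose t p i = i" "t \<le> i \<Longrightarrow> t \<le> transpose t p i"
    "i < d1 \<Longrightarrow> transpose t p i < d1" for i
    using pq by (auto simp: transpose_def)
  have tq: "j < t \<Longrightarrow> transpose t q j = j" "t \<le> j \<Longrightarrow> t \<le> transpose t q j"
    "j < d2 \<Longrightarrow> transpose t q j < d2" for j
    using pq by (auto simp: transpose_def)
  have A_zero: "A i j = 0" if "i < d1" "j < d2" "i < t \<or> j < t" "i \<noteq> j" for i j
    using A that unfolding partial_snf_def by blast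
  have "A (transpose t p i) (transpose t q j) = 0" if "i < d1" "j < d2" "i < t \<or> j < t" "i \<noteq> j" for i j
  proof (cases "i < t")
    case True
    then have "transpose t q j \<noteq> i"
      using pq that(4) by (auto simp: transpose_def)
    then show ?thesis
      using A_zero[of i "transpose t q j"] True that(1,2) tp(1) tq(3) by simp
  next
    case False
    then have "j < t" "transpose t p i \<noteq> j"
      using pq that(3,4) by (auto simp: transpose_def)
    then show ?thesis
      using A_zero[of "transpose t p i" j] that(1,2) tq(1) tp(3) by simp
  qed
  then show ?thesis
    using A tp tq unfolding partial_snf_def by simp
qed

lemma partial_snf_pivot:
  assumes A: "R_mat d1 d2 A" "partial_snf d1 d2 t A" and t: "t < d1" "t < d2"
  obtains A' where "R_equiv d1 d2 A A'" "R_mat d1 d2 A'" "partial_snf d1 d2 t A'"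
    "\<forall>i<d1. \<forall>j<d2. t \<le> i \<and> t \<le> j \<longrightarrow> (\<exists>x\<in>R. A' i j = A' t t * x)"
proof -
  define B where "B = (\<lambda>(i, j). A i j) ` ({t..<d1} \<times> {t..<d2})"
  have "\<exists>pv\<in>B. \<forall>x\<in>B. \<exists>r\<in>R. x = pv * r"
    using A(1) t by (intro ex_divisor_of_all) (auto simp: B_def R_mat_def)
  then obtain p q where pq: "t \<le> p" "p < d1" "t \<le> q" "q < d2"
    and pivot: "\<forall>x\<in>B. \<exists>r\<in>R. x = A p q * r"
    by (auto simp: B_def)
  have "A (transpose t p i) (transpose t q j) \<in> B" if "t \<le> i" "i < d1" "t \<le> j" "j < d2" for i j
    using that pq by (auto simp: B_def transpose_def)
  moreover have "R_mat d1 d2 (\<lambda>i j. A (transpose t p i) (transpose t q j))"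
    using A(1) pq by (auto simp: R_mat_def transpose_def)
  ultimately show ?thesis
    using that[of "\<lambda>i j. A (transpose t p i) (transpose t q j)"] pivot pq t
      R_equiv_transpose[of t d1 p t d2 q A] partial_snf_transpose[OF A(2) pq] by simp
qed

text \<open>Subtracting multiples of row and column \<open>t\<close>; for \<open>t < i\<close> the entry in column \<open>t\<close>
  becomes \<open>A i t - x i * A t t = 0\<close>.\<close>
lemma R_equiv_clear_pivot:
  assumes t: "t < d1" "t < d2" and xy: "\<forall>i. x i \<in> R" "\<forall>j. y j \<in> R"
    and above: "\<forall>i<t. A i t = 0"
    and col: "\<forall>i. t < i \<and> i < d1 \<longrightarrow> A i t = A t t * x i"
    and row: "\<forall>j. t < j \<and> j < d2 \<longrightarrow> A t j = A t t * y j"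
  shows "R_equiv d1 d2 A (\<lambda>i j. if t < i then A i j - x i * A t j else if i = t \<and> t < j then 0 else A i j)"
proof -
  define A2 where "A2 i j = A i j + (if t < i then - x i * A t j else 0)" for i j
  have "R_equiv d1 d2 A A2"
    unfolding A2_def using t xy by (intro R_equiv_row_op) auto
  moreover have "R_equiv d1 d2 A2 (\<lambda>i j. A2 i j + (if t < j then A2 i t * - y j else 0))"
    using t xy by (intro R_equiv_col_op) auto
  ultimately have equiv: "R_equiv d1 d2 A (\<lambda>i j. A2 i j + (if t < j then A2 i t * - y j else 0))"
    by (rule R_equiv_trans)
  have A2_col: "A2 i t = (if i = t then A t t else 0)" if "i < d1" for i
    using above col that by (auto simp: A2_def mult.commute)
  from equiv show ?thesis
  proof (rule R_equiv_cong)
    fix i j assume ij: "i < d1" "j < d2"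
    show "A2 i j + (if t < j then A2 i t * - y j else 0)
        = (if t < i then A i j - x i * A t j else if i = t \<and> t < j then 0 else A i j)"
    proof (cases "i = t")
      case True
      then show ?thesis
        using A2_col[OF ij(1)] row ij(2) by (simp add: A2_def)
    next
      case False
      then have "A2 i t = 0"
        using A2_col[OF ij(1)] by simp
      then show ?thesis
        using False by (simp add: A2_def)
    qed
  qed
qed

lemma partial_snf_clear:
  assumes A: "R_mat d1 d2 A" "partial_snf d1 d2 t A" and t: "t < d1" "t < d2"
    and pivot: "\<forall>i<d1. \<forall>j<d2. t \<le> i \<and> t \<le> j \<longrightarrow> (\<exists>z\<in>R. A i j = A t t * z)"
    and x: "\<forall>i. x i \<in> R" "\<forall>i. t < i \<and> i < d1 \<longrightarrow> A i t = A t t * x i"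
  defines "C \<equiv> \<lambda>i j. if t < i then A i j - x i * A t j else if i = t \<and> t < j then 0 else A i j"
  shows "R_mat d1 d2 C" "partial_snf d1 d2 (Suc t) C"
proof -
  have AR: "A i j \<in> R" if "i < d1" "j < d2" for i j
    using A(1) that by (simp add: R_mat_def)
  show "R_mat d1 d2 C"
    using AR x(1) t by (simp add: R_mat_def C_def)
  have zero: "A i j = 0" if "i < d1" "j < d2" "i < t \<or> j < t" "i \<noteq> j" for i j
    using A(2) that unfolding partial_snf_def by blast
  have "C i j = 0" if "i < d1" "j < d2" "i < Suc t \<or> j < Suc t" "i \<noteq> j" for i j
  proof -
    have "t < i \<and> j = t \<or> t < i \<and> j < t \<or> i = t \<or> i < t"
      using that by linarith
    then show ?thesis
      using that x(2) zero[of i j] zero[of t j] t by (auto simp: C_def mult.commute)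
  qed
  moreover have "\<exists>z\<in>R. C (Suc i) (Suc i) = z * C i i" if "Suc i < Suc t" for i
    using A(2) that unfolding partial_snf_def C_def
    by (cases "Suc i = t") (use t in auto)
  moreover have "\<exists>z\<in>R. C i j = z * C (Suc t - 1) (Suc t - 1)"
    if ij: "i < d1" "j < d2" "Suc t \<le> i" "Suc t \<le> j" for i j
  proof -
    have "t \<le> i" "t \<le> j"
      using ij by simp_all
    then obtain a where "a \<in> R" "A i j = A t t * a"
      using pivot ij(1,2) by blast
    moreover obtain b where "b \<in> R" "A t j = A t t * b"
      using pivot ij(2) \<open>t \<le> j\<close> t by blast
    ultimately show ?thesis
      using ij x(1) by (intro bexI[of _ "a - x i * b"]) (simp_all add: C_def algebra_simps)
  qed
  ultimately show "partial_snf d1 d2 (Suc t) C"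
    unfolding partial_snf_def by blast
qed

lemma partial_snf_step:
  assumes A: "R_mat d1 d2 A" "partial_snf d1 d2 t A" and t: "t < d1" "t < d2"
  obtains A' where "R_equiv d1 d2 A A'" "R_mat d1 d2 A'" "partial_snf d1 d2 (Suc t) A'"
proof -
  obtain A1 where A1: "R_equiv d1 d2 A A1" "R_mat d1 d2 A1" "partial_snf d1 d2 t A1"
    and pivot: "\<forall>i<d1. \<forall>j<d2. t \<le> i \<and> t \<le> j \<longrightarrow> (\<exists>z\<in>R. A1 i j = A1 t t * z)"
    using partial_snf_pivot[OF A t] by blast
  have "\<forall>i. \<exists>z. z \<in> R \<and> (t < i \<and> i < d1 \<longrightarrow> A1 i t = A1 t t * z)"
    using pivot t by (metis less_imp_le order_refl zero_mem)
  then obtain x where x: "\<forall>i. x i \<in> R" "\<forall>i. t < i \<and> i < d1 \<longrightarrow> A1 i t = A1 t t * x i"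
    by metis
  have "\<forall>j. \<exists>z. z \<in> R \<and> (t < j \<and> j < d2 \<longrightarrow> A1 t j = A1 t t * z)"
    using pivot t by (metis less_imp_le order_refl zero_mem)
  then obtain y where y: "\<forall>j. y j \<in> R" "\<forall>j. t < j \<and> j < d2 \<longrightarrow> A1 t j = A1 t t * y j"
    by metis
  have "\<forall>i<t. A1 i t = 0"
    using A1(3) t unfolding partial_snf_def by auto
  then have "R_equiv d1 d2 A1
      (\<lambda>i j. if t < i then A1 i j - x i * A1 t j else if i = t \<and> t < j then 0 else A1 i j)"
    using t x y by (intro R_equiv_clear_pivot[of t d1 d2 x y]) auto
  then show ?thesis
    using that R_equiv_trans[OF A1(1)] partial_snf_clear[OF A1(2,3) t pivot x] by blast
qed

lemma partial_snf_exists: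
  assumes "R_mat d1 d2 C" "t \<le> min d1 d2"
  obtains A where "R_equiv d1 d2 C A" "partial_snf d1 d2 t A"
proof -
  have "\<exists>A. R_equiv d1 d2 C A \<and> R_mat d1 d2 A \<and> partial_snf d1 d2 t A"
    using assms(2)
  proof (induction t)
    case 0
    then show ?case
      using assms(1) R_equiv_refl by (auto simp: partial_snf_def)
  next
    case (Suc t)
    then obtain A where A: "R_equiv d1 d2 C A" "R_mat d1 d2 A" "partial_snf d1 d2 t A"
      by auto
    have "t < d1" "t < d2"
      using Suc.prems by simp_all
    then obtain A' where "R_equiv d1 d2 A A'" "R_mat d1 d2 A'" "partial_snf d1 d2 (Suc t) A'"
      using partial_snf_step[OF A(2,3)] by blast
    then show ?case
      using R_equiv_trans[OF A(1)] by blast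
  qed
  then show ?thesis
    using that by blast
qed

lemma smith_normal_form_exists:
  assumes "R_mat d1 d2 C"
  obtains P Q D where "R_invertible R d1 P" "R_invertible R d2 Q"
    "\<forall>i<d1. \<forall>j<d2. D i j = mat_mult d2 (mat_mult d1 P C) Q i j"
    "\<forall>i<d1. \<forall>j<d2. i \<noteq> j \<longrightarrow> D i j = 0"
    "\<forall>i. i + 1 < min d1 d2 \<longrightarrow> (\<exists>x\<in>R. D (i + 1) (i + 1) = x * D i i)"
proof -
  obtain D where D: "R_equiv d1 d2 C D" "partial_snf d1 d2 (min d1 d2) D"
    using partial_snf_exists[OF assms order_refl] .
  have "\<forall>i<d1. \<forall>j<d2. i \<noteq> j \<longrightarrow> D i j = 0"
  proof (intro allI impI)
    fix i j assume ij: "i < d1" "j < d2" "i \<noteq> j"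
    then have "i < min d1 d2 \<or> j < min d1 d2"
      by auto
    then show "D i j = 0"
      using D(2) ij unfolding partial_snf_def by blast
  qed
  moreover have "\<forall>i. i + 1 < min d1 d2 \<longrightarrow> (\<exists>x\<in>R. D (i + 1) (i + 1) = x * D i i)"
    using D(2) unfolding partial_snf_def by simp
  ultimately show ?thesis
    using D(1) that unfolding R_equiv_def by blast
qed

end

lemma coord_spec:
  assumes "R_basis R m w"
  shows "\<forall>i<m. coord R m w y i \<in> R" "\<forall>i\<ge>m. coord R m w y i = 0" "y = (\<Sum>i<m. coord R m w y i * w i)"
proof -
  have "(\<forall>i<m. coord R m w y i \<in> R) \<and> (\<forall>i\<ge>m. coord R m w y i = 0) \<and> y = (\<Sum>i<m. coord R m w y i * w i)"
    unfolding coord_def using assms[unfolded R_basis_def, rule_format, of y] by (rule theI')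
  then show "\<forall>i<m. coord R m w y i \<in> R" "\<forall>i\<ge>m. coord R m w y i = 0" "y = (\<Sum>i<m. coord R m w y i * w i)"
    by blast+
qed

lemma coord_unique:
  assumes "R_basis R m w" "\<forall>i<m. r i \<in> R" "\<forall>i\<ge>m. r i = 0" "y = (\<Sum>i<m. r i * w i)"
  shows "coord R m w y = r"
  unfolding coord_def
  using assms(1) assms(2-4)[simplified] unfolding R_basis_def by (intro the1_equality) auto

lemma down_closed_eq_lessThan_card:
  assumes "finite S" "\<And>i j. j \<in> S \<Longrightarrow> i \<le> j \<Longrightarrow> i \<in> S"
  shows "S = {..<card S}"
proof (cases "S = {}")
  case False
  have "S \<subseteq> {..Max S}"
    using Max_ge[OF assms(1)] by auto
  moreover have "{..Max S} \<subseteq> S"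
    using assms(2) Max_in[OF assms(1) False] by auto
  ultimately have "S = {..<Suc (Max S)}"
    by (auto simp: lessThan_Suc_atMost)
  then show ?thesis
    by (metis card_lessThan)
qed simp

context finite_chain_subring
begin

lemma coord_linear:
  assumes B: "R_basis R m w" and q: "\<forall>l<s. q l \<in> R"
  shows "coord R m w (\<Sum>l<s. q l * u l) = (\<lambda>i. \<Sum>l<s. q l * coord R m w (u l) i)"
proof (rule coord_unique[OF B])
  show "\<forall>i<m. (\<Sum>l<s. q l * coord R m w (u l) i) \<in> R"
    using coord_spec(1)[OF B] q by (auto intro!: sum_mem)
  show "\<forall>i\<ge>m. (\<Sum>l<s. q l * coord R m w (u l) i) = 0"
    using coord_spec(2)[OF B] by simp
  have "(\<Sum>l<s. q l * u l) = (\<Sum>l<s. \<Sum>i<m. q l * coord R m w (u l) i * w i)"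
    by (subst coord_spec(3)[OF B]) (simp add: sum_distrib_left mult.assoc)
  also have "\<dots> = (\<Sum>i<m. (\<Sum>l<s. q l * coord R m w (u l) i) * w i)"
    by (subst sum.swap) (simp add: sum_distrib_right)
  finally show "(\<Sum>l<s. q l * u l) = (\<Sum>i<m. (\<Sum>l<s. q l * coord R m w (u l) i) * w i)" .
qed

lemma zero_column_imp_relation:
  assumes B: "R_basis R m w" and P: "R_invertible R m P" and Q: "R_mat s s Q" and "j < s"
    and zero: "\<forall>i<m. mat_mult s (mat_mult m P (\<lambda>i l. coord R m w (u l) i)) Q i j = 0"
  shows "(\<Sum>l<s. Q l j * u l) = 0"
proof -
  define C where "C i l = coord R m w (u l) i" for i l
  obtain P' where P': "\<forall>i<m. \<forall>k<m. mat_mult m P' P i k = mat_id i k"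
    using P unfolding R_invertible_iff by blast
  have "coord R m w (\<Sum>l<s. Q l j * u l) i = 0" if "i < m" for i
  proof -
    have "coord R m w (\<Sum>l<s. Q l j * u l) i = mat_mult s C Q i j"
      using coord_linear[OF B, of s "\<lambda>l. Q l j" u] Q \<open>j < s\<close>
      by (simp add: R_mat_def C_def mat_mult_def mult.commute)
    also have "\<dots> = mat_mult m (mat_mult m P' P) (mat_mult s C Q) i j"
      using P' that by (simp add: mat_mult_id_left cong: mat_mult_cong)
    also have "\<dots> = mat_mult m P' (mat_mult s (mat_mult m P C) Q) i j"
      by (simp add: mat_mult_assoc)
    also have "\<dots> = 0"
      using zero by (simp add: mat_mult_def C_def)
    finally show ?thesis .
  qed
  then show ?thesis
    using coord_spec(3)[OF B, of "\<Sum>l<s. Q l j * u l"] by simp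
qed

lemma snf_rank_witness:
  assumes B: "R_basis R m w"
  obtains m' w' P Q D where "R_basis R m' w'" "R_invertible R m' P" "R_invertible R s Q"
    "\<forall>i<m'. \<forall>j<s. D i j = mat_mult s (mat_mult m' P (\<lambda>i l. coord R m' w' (u l) i)) Q i j"
    "\<forall>i<m'. \<forall>j<s. i \<noteq> j \<longrightarrow> D i j = 0"
    "\<forall>i. i + 1 < min m' s \<longrightarrow> (\<exists>x\<in>R. D (i + 1) (i + 1) = x * D i i)"
    "snf_rank R u s = card {i. i < min m' s \<and> D i i \<noteq> 0}"
proof -
  have "R_mat m s (\<lambda>i l. coord R m w (u l) i)"
    using coord_spec(1)[OF B] by (simp add: R_mat_def)
  then obtain P Q D where "R_invertible R m P" "R_invertible R s Q"
    "\<forall>i<m. \<forall>j<s. D i j = mat_mult s (mat_mult m P (\<lambda>i l. coord R m w (u l) i)) Q i j"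
    "\<forall>i<m. \<forall>j<s. i \<noteq> j \<longrightarrow> D i j = 0"
    "\<forall>i. i + 1 < min m s \<longrightarrow> (\<exists>x\<in>R. D (i + 1) (i + 1) = x * D i i)"
    by (rule smith_normal_form_exists)
  then have "\<exists>r m w P Q D. R_basis R m w \<and> R_invertible R m P \<and> R_invertible R s Q \<and>
      (\<forall>i<m. \<forall>j<s. D i j = mat_mult s (mat_mult m P (\<lambda>i' l. coord R m w (u l) i')) Q i j) \<and>
      (\<forall>i<m. \<forall>j<s. i \<noteq> j \<longrightarrow> D i j = 0) \<and>
      (\<forall>i. i + 1 < min m s \<longrightarrow> (\<exists>x\<in>R. D (i + 1) (i + 1) = x * D i i)) \<and>
      r = card {i. i < min m s \<and> D i i \<noteq> 0}"
    using B by blast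
  then have "\<exists>m w P Q D. R_basis R m w \<and> R_invertible R m P \<and> R_invertible R s Q \<and>
      (\<forall>i<m. \<forall>j<s. D i j = mat_mult s (mat_mult m P (\<lambda>i' l. coord R m w (u l) i')) Q i j) \<and>
      (\<forall>i<m. \<forall>j<s. i \<noteq> j \<longrightarrow> D i j = 0) \<and>
      (\<forall>i. i + 1 < min m s \<longrightarrow> (\<exists>x\<in>R. D (i + 1) (i + 1) = x * D i i)) \<and>
      snf_rank R u s = card {i. i < min m s \<and> D i i \<noteq> 0}"
    unfolding snf_rank_def by (rule someI_ex)
  then show ?thesis
    using that by blast
qed

end

lemma divisor_chain_nonzero_initial:
  fixes D :: "nat \<Rightarrow> nat \<Rightarrow> 'a::comm_ring_1"
  assumes chain: "\<forall>i. i + 1 < n \<longrightarrow> (\<exists>x. D (i + 1) (i + 1) = x * D i i)"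
  shows "{i. i < n \<and> D i i \<noteq> 0} = {..<card {i. i < n \<and> D i i \<noteq> 0}}"
proof (rule down_closed_eq_lessThan_card)
  fix i j assume "j \<in> {i. i < n \<and> D i i \<noteq> 0}" "i \<le> j"
  then show "i \<in> {i. i < n \<and> D i i \<noteq> 0}"
  proof (induction j)
    case (Suc j)
    show ?case
    proof (cases "i = Suc j")
      case False
      obtain x where "D (Suc j) (Suc j) = x * D j j"
        using chain Suc.prems(1) by auto
      then have "j \<in> {i. i < n \<and> D i i \<noteq> 0}"
        using Suc.prems(1) by auto
      then show ?thesis
        using Suc.IH Suc.prems(2) False by simp
    qed (use Suc.prems in auto)
  qed simp
qed simp

context finite_chain_subring
begin

lemma snf_rank_kernel:
  assumes "R_basis R m w"
  obtains Q where "R_invertible R s Q" "\<And>j. snf_rank R u s \<le> j \<Longrightarrow> j < s \<Longrightarrow> (\<Sum>l<s. Q l j * u l) = 0"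
proof -
  obtain m' w' P Q D where B: "R_basis R m' w'" and P: "R_invertible R m' P" and Q: "R_invertible R s Q"
    and D: "\<forall>i<m'. \<forall>j<s. D i j = mat_mult s (mat_mult m' P (\<lambda>i l. coord R m' w' (u l) i)) Q i j"
    and off: "\<forall>i<m'. \<forall>j<s. i \<noteq> j \<longrightarrow> D i j = 0"
    and chain: "\<forall>i. i + 1 < min m' s \<longrightarrow> (\<exists>x\<in>R. D (i + 1) (i + 1) = x * D i i)"
    and rank: "snf_rank R u s = card {i. i < min m' s \<and> D i i \<noteq> 0}"
    by (rule snf_rank_witness[OF assms])
  have initial: "{i. i < min m' s \<and> D i i \<noteq> 0} = {..<snf_rank R u s}"
    unfolding rank using chain by (intro divisor_chain_nonzero_initial) blast
  have "(\<Sum>l<s. Q l j * u l) = 0" if "snf_rank R u s \<le> j" "j < s" for j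
  proof (rule zero_column_imp_relation[OF B P _ \<open>j < s\<close>])
    show "R_mat s s Q"
      using Q by (simp add: R_invertible_iff)
    have "D i j = 0" if "i < m'" for i
    proof (cases "i = j")
      case True
      have "j \<notin> {i. i < min m' s \<and> D i i \<noteq> 0}"
        using \<open>snf_rank R u s \<le> j\<close> by (simp only: initial) simp
      then show ?thesis
        using True that \<open>j < s\<close> by simp
    next
      case False
      then show ?thesis
        using off that \<open>j < s\<close> by blast
    qed
    then show "\<forall>i<m'. mat_mult s (mat_mult m' P (\<lambda>i l. coord R m' w' (u l) i)) Q i j = 0"
      using D \<open>j < s\<close> by simp
  qed
  then show ?thesis
    using that Q by blast
qed

lemma R_invertible_kernel:
  assumes Q: "R_invertible R s Q" and Qv: "\<forall>q<s. (\<Sum>k<s. Q q k * v k) = 0" and "k < s"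
  shows "v k = 0"
proof -
  obtain Q' where Q': "\<forall>i<s. \<forall>k<s. mat_mult s Q' Q i k = mat_id i k"
    using Q unfolding R_invertible_iff by blast
  have "v k = (\<Sum>i<s. mat_id k i * v i)"
    using \<open>k < s\<close> by (simp add: mat_id_def)
  also have "\<dots> = (\<Sum>i<s. (\<Sum>q<s. Q' k q * Q q i) * v i)"
    using Q' \<open>k < s\<close> by (simp add: mat_mult_def)
  also have "\<dots> = (\<Sum>i<s. \<Sum>q<s. Q' k q * (Q q i * v i))"
    by (simp add: sum_distrib_right mult.assoc)
  also have "\<dots> = (\<Sum>q<s. Q' k q * (\<Sum>i<s. Q q i * v i))"
    by (subst sum.swap) (simp add: sum_distrib_left)
  also have "\<dots> = 0"
    using Qv by simp
  finally show ?thesis .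
qed

text \<open>The family \<open>\<gamma>\<^sub>j = \<Sum>\<^sub>q Q\<^sub>q\<^sub>,\<^sub>\<rho>\<^sub>+\<^sub>j \<beta>\<^sub>q\<close>: a relation among the \<open>\<gamma>\<^sub>j\<close> is a relation among
  the \<open>\<beta>\<^sub>q\<close> with coefficient vector \<open>Q v\<close>, so \<open>Q v = 0\<close> and hence \<open>v = 0\<close>.\<close>
lemma R_indep_invertible_columns:
  assumes \<beta>: "R_indep R \<beta> s" and Q: "R_invertible R s Q"
  shows "R_indep R (\<lambda>j. \<Sum>q<s. Q q (\<rho> + j) * \<beta> q) (s - \<rho>)"
  unfolding R_indep_def
proof (rule allI, rule impI)
  fix x assume x: "(\<forall>j<s - \<rho>. x j \<in> R) \<and> (\<Sum>j<s - \<rho>. x j * (\<Sum>q<s. Q q (\<rho> + j) * \<beta> q)) = 0"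
  define v where "v k = (if \<rho> \<le> k then x (k - \<rho>) else 0)" for k
  have QR: "\<forall>q<s. \<forall>k<s. Q q k \<in> R"
    using Q by (simp add: R_invertible_iff R_mat_def)
  have reindex: "(\<Sum>k<s. f k * v k) = (\<Sum>j<s - \<rho>. f (\<rho> + j) * x j)" for f :: "nat \<Rightarrow> 'a"
  proof -
    have "(\<Sum>k<s. f k * v k) = (\<Sum>k\<in>{\<rho>..<s}. f k * x (k - \<rho>))"
      by (rule sum.mono_neutral_cong_right) (auto simp: v_def)
    also have "\<dots> = (\<Sum>j<s - \<rho>. f (\<rho> + j) * x j)"
      by (rule sum.reindex_bij_witness[of _ "\<lambda>j. \<rho> + j" "\<lambda>k. k - \<rho>"]) auto
    finally show ?thesis .
  qed
  have "(\<Sum>q<s. (\<Sum>k<s. Q q k * v k) * \<beta> q) = (\<Sum>q<s. \<Sum>j<s - \<rho>. x j * (Q q (\<rho> + j) * \<beta> q))"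
    by (simp only: reindex) (simp add: sum_distrib_right sum_distrib_left ac_simps)
  also have "\<dots> = (\<Sum>j<s - \<rho>. x j * (\<Sum>q<s. Q q (\<rho> + j) * \<beta> q))"
    by (subst sum.swap) (simp add: sum_distrib_left)
  finally have "(\<Sum>q<s. (\<Sum>k<s. Q q k * v k) * \<beta> q) = (\<Sum>j<s - \<rho>. x j * (\<Sum>q<s. Q q (\<rho> + j) * \<beta> q))" .
  moreover have "\<forall>q<s. (\<Sum>k<s. Q q k * v k) \<in> R"
    using QR x by (auto simp: v_def intro!: sum_mem)
  ultimately have Qv: "(\<Sum>k<s. Q q k * v k) = 0" if "q < s" for q
    using \<beta> x that unfolding R_indep_def by auto
  have v0: "v k = 0" if "k < s" for k
    using R_invertible_kernel[OF Q _ that] Qv by blast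
  show "\<forall>j<s - \<rho>. x j = 0"
  proof (intro allI impI)
    fix j assume "j < s - \<rho>"
    then have "v (\<rho> + j) = 0"
      by (intro v0) simp
    then show "x j = 0"
      by (simp add: v_def)
  qed
qed

end

section \<open>Roots of skew polynomials under operator evaluation\<close>

lemma (in skew_poly_ring) nonconjugate_sym:
  fixes a :: "nat \<Rightarrow> 'a" and l :: nat
  assumes "\<forall>i j b. i < j \<and> j < l \<and> b dvd 1 \<longrightarrow> (a i - \<sigma> b * a j * inv_S b) dvd 1"
  shows "\<forall>i j b. i < l \<and> j < l \<and> i \<noteq> j \<and> b dvd 1 \<longrightarrow> (a i - \<sigma> b * a j * inv_S b) dvd 1"
proof (intro allI impI)
  fix i j :: nat and b :: 'a assume ijb: "i < l \<and> j < l \<and> i \<noteq> j \<and> b dvd 1"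
  show "(a i - \<sigma> b * a j * inv_S b) dvd 1"
  proof (cases "i < j")
    case False
    define b' where "b' = inv_S b"
    have bb': "b * b' = 1"
      using ijb by (simp add: b'_def inv_S_right)
    then have "b' dvd 1" "inv_S b' = b"
      by (auto intro: dvdI inv_S_eq simp: mult.commute)
    then have "(a j - \<sigma> b' * a i * b) dvd 1"
      using assms False ijb by (metis linorder_neqE_nat)
    moreover have "\<sigma> b dvd 1"
      using ring_automorphism_unit[OF aut bb'] by (auto intro: dvdI)
    ultimately have "(\<sigma> b * (a j - \<sigma> b' * a i * b) * b') dvd 1"
      using \<open>b' dvd 1\<close> by (intro unit_mult)
    moreover have "\<sigma> b * (a j - \<sigma> b' * a i * b) * b' = \<sigma> b * a j * b' - (\<sigma> b * \<sigma> b') * a i * (b * b')"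
      by (simp add: algebra_simps)
    then have "\<sigma> b * (a j - \<sigma> b' * a i * b) * b' = - (a i - \<sigma> b * a j * inv_S b)"
      using bb' ring_automorphism_unit[OF aut bb'] by (simp add: b'_def)
    ultimately show ?thesis
      by (metis minus_dvd_iff)
  qed (use assms ijb in blast)
qed

lemma R_indep_image:
  assumes "R_indep R g c"
    and "\<And>x. \<forall>j<c. x j \<in> R \<Longrightarrow> (\<Sum>j<c. x j * f (g j)) = f (\<Sum>j<c. x j * g j)"
    and "\<And>\<delta>. f \<delta> = 0 \<Longrightarrow> \<delta> = 0"
  shows "R_indep R (\<lambda>j. f (g j)) c"
  using assms unfolding R_indep_def by metis

context finite_chain_subring
begin

lemma R_indep_image_Suc:
  assumes "R_indep R g (Suc c)"
    and linear: "\<And>x. \<forall>j<c. x j \<in> R \<Longrightarrow> (\<Sum>j<c. x j * f (g (Suc j))) = f (\<Sum>j<c. x j * g (Suc j))"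
    and kernel: "\<And>\<delta>. f \<delta> = 0 \<Longrightarrow> \<exists>r\<in>R. \<delta> = r * g 0"
  shows "R_indep R (\<lambda>j. f (g (Suc j))) c"
  unfolding R_indep_def
proof (rule allI, rule impI)
  fix x assume x: "(\<forall>j<c. x j \<in> R) \<and> (\<Sum>j<c. x j * f (g (Suc j))) = 0"
  then have "f (\<Sum>j<c. x j * g (Suc j)) = 0"
    using linear[of x] by simp
  then obtain r where r: "r \<in> R" "(\<Sum>j<c. x j * g (Suc j)) = r * g 0"
    using kernel by blast
  define y where "y j = (if j = 0 then - r else x (j - 1))" for j
  have "(\<Sum>j<Suc c. y j * g j) = 0"
    using r(2) by (subst sum.lessThan_Suc_shift) (simp add: y_def)
  moreover have "\<forall>j<Suc c. y j \<in> R"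
    using x r(1) by (auto simp: y_def less_Suc_eq_0_disj)
  ultimately have y0: "\<forall>j<Suc c. y j = 0"
    using assms(1) unfolding R_indep_def by blast
  show "\<forall>j<c. x j = 0"
  proof (intro allI impI)
    fix j assume "j < c"
    then have "y (Suc j) = 0"
      using y0 by simp
    then show "x j = 0"
      by (simp add: y_def)
  qed
qed

end

lemma sum_decrement:
  fixes f :: "'b \<Rightarrow> nat"
  shows "i0 \<in> A \<Longrightarrow> finite A \<Longrightarrow> 0 < f i0 \<Longrightarrow> (\<Sum>i\<in>A. (f(i0 := f i0 - 1)) i) + 1 = (\<Sum>i\<in>A. f i)"
  by (simp add: sum.remove[of A i0] sum.cong[of "A - {i0}" _ "f(i0 := f i0 - 1)" f])

locale lrs_setting = skew_poly_ring \<sigma> + chain_extension R \<theta> h m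
  for \<sigma> :: "'a::{comm_ring_1,finite} \<Rightarrow> 'a" and R :: "'a set" and \<theta> h m +
  fixes a :: "nat \<Rightarrow> 'a" and l :: nat
  assumes R_fixed: "R = {x. \<sigma> x = x}"
    and a_units: "\<forall>i<l. a i dvd 1"
    and a_nonconjugate: "\<forall>i j b. i < l \<and> j < l \<and> i \<noteq> j \<and> b dvd 1 \<longrightarrow> (a i - \<sigma> b * a j * inv_S b) dvd 1"
begin

lemma fixed_if_mem: "x \<in> R \<Longrightarrow> \<sigma> x = x"
  using R_fixed by simp

lemma op_eval_R_combination:
  "\<forall>j<c. x j \<in> R \<Longrightarrow> op_eval \<sigma> P b (\<Sum>j<c. x j * g j) = (\<Sum>j<c. x j * op_eval \<sigma> P b (g j))"
  by (simp add: op_eval_sum_right op_eval_fixed_mult_right fixed_if_mem)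

text \<open>Writing \<open>\<delta> = \<pi>\<^sup>v u\<close>, the equation says that \<open>\<pi>\<^sup>v\<close> annihilates the unit
  \<open>\<sigma>(u) (a\<^sub>i - \<sigma>(\<gamma> u\<^sup>-\<^sup>1) a\<^sub>i\<^sub>0 (\<gamma> u\<^sup>-\<^sup>1)\<^sup>-\<^sup>1)\<close>.\<close>
lemma conj_eq_imp_zero:
  assumes i: "i \<noteq> i0" "i < l" "i0 < l" and \<gamma>: "\<gamma> dvd 1"
    and eq: "\<sigma> \<delta> * a i = \<sigma> \<gamma> * a i0 * inv_S \<gamma> * \<delta>"
  shows "\<delta> = 0"
proof (rule ccontr)
  assume "\<delta> \<noteq> 0"
  then obtain v u where \<delta>: "\<delta> = \<pi> ^ v * u" and u: "u dvd 1" and "\<pi> ^ v \<noteq> 0"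
    by (rule unit_times_\<pi>_power)
  define \<gamma>' u' where "\<gamma>' = inv_S \<gamma>" and "u' = inv_S u"
  have \<gamma>\<gamma>': "\<gamma> * \<gamma>' = 1" and uu': "u * u' = 1"
    using \<gamma> u by (simp_all add: \<gamma>'_def u'_def inv_S_right)
  have \<sigma>uu': "\<sigma> u * \<sigma> u' = 1"
    using ring_automorphism_unit[OF aut uu'] .
  define w where "w = \<sigma> u * a i - \<sigma> \<gamma> * a i0 * \<gamma>' * u"
  have "\<pi> ^ v * w = \<sigma> \<delta> * a i - \<sigma> \<gamma> * a i0 * \<gamma>' * \<delta>"
    using fixed_if_mem[OF power_mem[OF \<pi>_mem]] by (simp add: w_def \<delta> algebra_simps)
  then have "\<pi> ^ v * w = 0"
    using eq by (simp add: \<gamma>'_def)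
  have "\<not> w dvd 1"
  proof
    assume "w dvd 1"
    then obtain w' where "1 = w * w'"
      by (rule dvdE)
    then have "\<pi> ^ v = \<pi> ^ v * w * w'"
      by (simp add: mult.assoc)
    then show False
      using \<open>\<pi> ^ v * w = 0\<close> \<open>\<pi> ^ v \<noteq> 0\<close> by simp
  qed
  moreover have "(a i - \<sigma> (\<gamma> * u') * a i0 * inv_S (\<gamma> * u')) dvd 1"
    using a_nonconjugate i unit_mult[OF \<gamma>] uu' by (metis dvdI mult.commute)
  moreover have "inv_S (\<gamma> * u') = u * \<gamma>'"
    using \<gamma>\<gamma>' uu' by (intro inv_S_eq) (simp add: algebra_simps)
  then have "a i - \<sigma> (\<gamma> * u') * a i0 * inv_S (\<gamma> * u') = \<sigma> u' * w"
  proof -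
    have cancel: "\<sigma> u' * (\<sigma> u * x) = x" for x
      using \<sigma>uu' by (simp add: mult.assoc[symmetric] mult.commute[of "\<sigma> u'"])
    show ?thesis
      unfolding w_def using \<open>inv_S (\<gamma> * u') = u * \<gamma>'\<close> by (simp add: algebra_simps) (simp only: cancel)
  qed
  ultimately show False
    using dvd_mult_right by metis
qed

lemma conj_eq_imp_R_multiple:
  assumes \<gamma>\<gamma>': "\<gamma> * \<gamma>' = 1" and a: "a0 dvd 1" and eq: "\<sigma> \<delta> * a0 = \<sigma> \<gamma> * a0 * \<gamma>' * \<delta>"
  shows "\<exists>r\<in>R. \<delta> = r * \<gamma>"
proof
  have "\<sigma> \<delta> = \<sigma> \<delta> * a0 * inv_S a0"
    using inv_S_right[OF a] by (simp add: mult.assoc)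
  also have "\<dots> = \<sigma> \<gamma> * \<gamma>' * \<delta> * (a0 * inv_S a0)"
    using eq by (simp add: ac_simps)
  finally have "\<sigma> \<delta> = \<sigma> \<gamma> * \<gamma>' * \<delta>"
    using inv_S_right[OF a] by simp
  then have "\<sigma> (\<gamma>' * \<delta>) = \<gamma>' * \<delta>"
    using ring_automorphism_unit[OF aut \<gamma>\<gamma>'] by (simp add: mult.assoc[symmetric]) (simp add: ac_simps)
  then show "\<gamma>' * \<delta> \<in> R"
    by (simp add: R_fixed)
  show "\<delta> = \<gamma>' * \<delta> * \<gamma>"
    using \<gamma>\<gamma>' by (simp add: ac_simps)
qed

text \<open>Dividing out the root \<open>b\<close> coming from \<open>\<gamma>\<^sub>i\<^sub>0\<^sub>,\<^sub>0\<close> maps each family through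
  \<open>\<D>\<^sub>a\<^sub>i - b\<close>; this keeps the families independent, except that \<open>\<gamma>\<^sub>i\<^sub>0\<^sub>,\<^sub>0\<close> is lost.\<close>
lemma R_indep_after_root:
  assumes indep: "\<forall>i<l. R_indep R (\<gamma> i) (cnt i)" and i0: "i0 < l" "0 < cnt i0" and "i < l"
  defines "b \<equiv> \<sigma> (\<gamma> i0 0) * a i0 * inv_S (\<gamma> i0 0)"
  shows "R_indep R (\<lambda>j. op_eval \<sigma> [:- b, 1:] (a i) (if i = i0 then \<gamma> i (Suc j) else \<gamma> i j))
    ((cnt(i0 := cnt i0 - 1)) i)"
proof -
  have unit: "\<gamma> i0 0 dvd 1"
    using R_indep_imp_unit indep i0 by blast
  show ?thesis
  proof (cases "i = i0")
    case True
    have "R_indep R (\<gamma> i0) (Suc (cnt i0 - 1))"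
      using indep i0 by simp
    then have "R_indep R (\<lambda>j. op_eval \<sigma> [:- b, 1:] (a i0) (\<gamma> i0 (Suc j))) (cnt i0 - 1)"
    proof (rule R_indep_image_Suc[where f = "op_eval \<sigma> [:- b, 1:] (a i0)"])
      fix \<delta> assume "op_eval \<sigma> [:- b, 1:] (a i0) \<delta> = 0"
      then have "\<sigma> \<delta> * a i0 = \<sigma> (\<gamma> i0 0) * a i0 * inv_S (\<gamma> i0 0) * \<delta>"
        by (simp add: op_eval_linear b_def)
      then show "\<exists>r\<in>R. \<delta> = r * \<gamma> i0 0"
        using conj_eq_imp_R_multiple inv_S_right[OF unit] a_units i0(1) by blast
    qed (simp add: op_eval_R_combination)
    then show ?thesis
      using True by simp
  next
    case False
    have "R_indep R (\<lambda>j. op_eval \<sigma> [:- b, 1:] (a i) (\<gamma> i j)) (cnt i)"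
    proof (rule R_indep_image[where f = "op_eval \<sigma> [:- b, 1:] (a i)"])
      show "R_indep R (\<gamma> i) (cnt i)"
        using indep \<open>i < l\<close> by blast
      fix \<delta> assume "op_eval \<sigma> [:- b, 1:] (a i) \<delta> = 0"
      then have "\<sigma> \<delta> * a i = \<sigma> (\<gamma> i0 0) * a i0 * inv_S (\<gamma> i0 0) * \<delta>"
        by (simp add: op_eval_linear b_def)
      then show "\<delta> = 0"
        using conj_eq_imp_zero[OF False \<open>i < l\<close> i0(1) unit] by blast
    qed (simp add: op_eval_R_combination)
    then show ?thesis
      using False by simp
  qed
qed

theorem op_eval_vanishing_imp_zero:
  assumes "\<forall>i<l. R_indep R (\<gamma> i) (cnt i)" "\<forall>i<l. \<forall>j<cnt i. op_eval \<sigma> P (a i) (\<gamma> i j) = 0"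
    and "degree P < (\<Sum>i<l. cnt i)"
  shows "P = 0"
  using assms
proof (induction "degree P" arbitrary: P \<gamma> cnt rule: less_induct)
  case less
  show ?case
  proof (rule ccontr)
    assume "P \<noteq> 0"
    obtain i0 where i0: "i0 < l" "0 < cnt i0"
      using less.prems(3) by (metis gr_zeroI less_zeroE sum.neutral lessThan_iff)
    define b where "b = \<sigma> (\<gamma> i0 0) * a i0 * inv_S (\<gamma> i0 0)"
    have "\<gamma> i0 0 dvd 1"
      using R_indep_imp_unit less.prems(1) i0 by blast
    then have "op_eval \<sigma> P b 1 = 0"
      using op_eval_conj_root less.prems(2) i0 by (simp add: b_def)
    then obtain P' where P': "P = skew_mult \<sigma> P' [:- b, 1:]" "degree P = Suc (degree P')"
      using \<open>P \<noteq> 0\<close> by (rule skew_root_factor)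
    define \<gamma>' where "\<gamma>' = (\<lambda>i j. op_eval \<sigma> [:- b, 1:] (a i) (if i = i0 then \<gamma> i (Suc j) else \<gamma> i j))"
    define cnt' where "cnt' = cnt(i0 := cnt i0 - 1)"
    have "P' = 0"
    proof (rule less.hyps[of P' \<gamma>' cnt'])
      show "degree P' < degree P"
        using P' by simp
      show "\<forall>i<l. R_indep R (\<gamma>' i) (cnt' i)"
        using R_indep_after_root[OF less.prems(1) i0] by (simp add: \<gamma>'_def cnt'_def b_def)
      show "\<forall>i<l. \<forall>j<cnt' i. op_eval \<sigma> P' (a i) (\<gamma>' i j) = 0"
        using less.prems(2) by (simp add: \<gamma>'_def cnt'_def P'(1) op_eval_skew_mult[symmetric])
      show "degree P' < (\<Sum>i<l. cnt' i)"
        using less.prems(3) P'(2) i0 sum_decrement[of i0 "{..<l}" cnt] by (simp add: cnt'_def)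
    qed
    then show False
      using P' \<open>P \<noteq> 0\<close> by simp
  qed
qed

end

section \<open>Decoding\<close>

lemma (in skew_poly_ring) codeword_poly:
  assumes "lrs_code \<sigma> k l nn a \<beta> c" "0 < k"
  obtains f where "degree f < k" "\<forall>i<l. \<forall>j<nn i. op_eval \<sigma> f (a i) (\<beta> i j) = c i j"
proof -
  obtain u where u: "\<forall>i<l. \<forall>j<nn i. c i j = (\<Sum>s<k. u s * D_op \<sigma> (a i) s (\<beta> i j))"
    using assms(1) unfolding lrs_code_def by blast
  have "degree (\<Sum>s<k. monom (u s) s) \<le> k - 1"
    by (intro degree_le) (auto simp: coeff_sum coeff_monom)
  then show ?thesis
    using assms(2) u by (intro that[of "\<Sum>s<k. monom (u s) s"]) (simp_all add: op_eval_poly_of_coeffs)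
qed

context lrs_setting
begin

text \<open>An invertible \<open>R\<close>-linear recombination of a block \<open>e\<close> of rank \<open>\<rho>\<close> has \<open>s - \<rho>\<close> zero
  entries; the same recombination of \<open>\<beta>\<close> gives \<open>s - \<rho>\<close> independent roots.\<close>
lemma error_block_roots:
  assumes \<beta>: "R_indep R \<beta> s"
    and G: "\<forall>q<s. op_eval \<sigma> G b (\<beta> q) = op_eval \<sigma> L b (e q)"
  obtains \<gamma> where "R_indep R \<gamma> (s - snf_rank R e s)"
    "\<forall>j<s - snf_rank R e s. op_eval \<sigma> G b (\<gamma> j) = 0"
proof -
  define \<rho> where "\<rho> = snf_rank R e s"
  obtain Q where Q: "R_invertible R s Q" and kernel: "\<And>j. \<rho> \<le> j \<Longrightarrow> j < s \<Longrightarrow> (\<Sum>l<s. Q l j * e l) = 0"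
    using snf_rank_kernel[OF R_basis_powers] unfolding \<rho>_def by blast
  have QR: "\<forall>q<s. Q q j \<in> R" if "j < s" for j
    using Q that by (simp add: R_invertible_def)
  define \<gamma> where "\<gamma> j = (\<Sum>q<s. Q q (\<rho> + j) * \<beta> q)" for j
  have "op_eval \<sigma> G b (\<gamma> j) = 0" if "j < s - \<rho>" for j
  proof -
    have "op_eval \<sigma> G b (\<gamma> j) = (\<Sum>q<s. Q q (\<rho> + j) * op_eval \<sigma> L b (e q))"
      using QR[of "\<rho> + j"] that G by (simp add: \<gamma>_def op_eval_R_combination)
    also have "\<dots> = op_eval \<sigma> L b (\<Sum>q<s. Q q (\<rho> + j) * e q)"
      using QR[of "\<rho> + j"] that by (simp add: op_eval_R_combination)
    also have "\<dots> = 0"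
      using kernel[of "\<rho> + j"] that by simp
    finally show ?thesis .
  qed
  then show ?thesis
    using R_indep_invertible_columns[OF \<beta> Q] that unfolding \<gamma>_def \<rho>_def by blast
qed

theorem key_equation_solution:
  fixes nn :: "nat \<Rightarrow> nat" and \<beta> c e :: "nat \<Rightarrow> nat \<Rightarrow> 'a"
  defines "n \<equiv> \<Sum>i<l. nn i"
  assumes indep: "\<forall>i<l. R_indep R (\<beta> i) (nn i)" and k: "0 < k" "k \<le> n"
    and f: "degree f < k" "\<forall>i<l. \<forall>j<nn i. op_eval \<sigma> f (a i) (\<beta> i j) = c i j"
    and wt: "sum_rank_wt R l nn e \<le> (n - k) div 2"
    and L: "degree L \<le> (n - k) div 2" and Q: "degree Q \<le> (n - k) div 2 + k - 1"
    and key: "\<forall>i<l. \<forall>j<nn i. op_eval \<sigma> Q (a i) (\<beta> i j) = op_eval \<sigma> L (a i) (c i j + e i j)"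
  shows "Q = skew_mult \<sigma> L f"
proof -
  define G where "G = Q - skew_mult \<sigma> L f"
  have "\<forall>i<l. \<forall>j<nn i. op_eval \<sigma> G (a i) (\<beta> i j) = op_eval \<sigma> L (a i) (e i j)"
    using key f(2) by (simp add: G_def op_eval_diff op_eval_skew_mult op_eval_add_right)
  then have "\<forall>i<l. \<exists>\<gamma>. R_indep R \<gamma> (nn i - snf_rank R (e i) (nn i)) \<and>
      (\<forall>j<nn i - snf_rank R (e i) (nn i). op_eval \<sigma> G (a i) (\<gamma> j) = 0)"
    using indep by (metis error_block_roots)
  then obtain \<gamma> where \<gamma>: "\<forall>i<l. R_indep R (\<gamma> i) (nn i - snf_rank R (e i) (nn i))"
    "\<forall>i<l. \<forall>j<nn i - snf_rank R (e i) (nn i). op_eval \<sigma> G (a i) (\<gamma> i j) = 0"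
    by metis
  have "n \<le> (\<Sum>i<l. nn i - snf_rank R (e i) (nn i)) + sum_rank_wt R l nn e"
    unfolding n_def sum_rank_wt_def sum.distrib[symmetric] by (intro sum_mono) simp
  moreover have "degree (skew_mult \<sigma> L f) \<le> (n - k) div 2 + k - 1"
    using degree_skew_mult_le[of L f] L f(1) by linarith
  moreover have "2 * ((n - k) div 2) \<le> n - k"
    by simp
  ultimately have "degree G < (\<Sum>i<l. nn i - snf_rank R (e i) (nn i))"
    using degree_diff_le_max[of Q "skew_mult \<sigma> L f"] Q wt k unfolding G_def by linarith
  then have "G = 0"
    using op_eval_vanishing_imp_zero[OF \<gamma>] by blast
  then show ?thesis
    by (simp add: G_def)
qed

lemma op_eval_interpolation_unique:
  assumes "\<forall>i<l. R_indep R (\<beta> i) (nn i)" "degree P < (\<Sum>i<l. nn i)" "degree P' < (\<Sum>i<l. nn i)"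
    and "\<forall>i<l. \<forall>j<nn i. op_eval \<sigma> P (a i) (\<beta> i j) = op_eval \<sigma> P' (a i) (\<beta> i j)"
  shows "P = P'"
proof -
  have "P - P' = 0"
    using assms degree_diff_le_max[of P P']
    by (intro op_eval_vanishing_imp_zero[OF assms(1)]) (simp_all add: op_eval_diff)
  then show ?thesis
    by simp
qed

end

lemma lrs_setting_intro:
  fixes \<sigma> :: "'a::{comm_ring_1,finite} \<Rightarrow> 'a"
  assumes aut: "ring_automorphism \<sigma>" and "R = {x. \<sigma> x = x}" "chain_ring R"
    and "chain_extension_axioms R \<theta> h m" "\<forall>i<l. a i dvd 1"
    and cond_i: "\<forall>i j b. i < j \<and> j < l \<and> b dvd 1 \<longrightarrow> (a i - \<sigma> b * a j * inv_S b) dvd 1"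
  shows "lrs_setting \<sigma> R \<theta> h m a l"
proof -
  interpret skew_poly_ring \<sigma>
    using aut by (rule skew_poly_ring.intro)
  show ?thesis
    using assms nonconjugate_sym[OF cond_i]
    by (intro lrs_setting.intro skew_poly_ring.intro chain_extension.intro finite_chain_subring.intro
        lrs_setting_axioms.intro) auto
qed

theorem lemma8:
  fixes \<sigma> :: "'a::{comm_ring_1,finite} \<Rightarrow> 'a"
    and R :: "'a set"
    and l k :: nat and nn :: "nat \<Rightarrow> nat"
    and a :: "nat \<Rightarrow> 'a" and \<beta> c e r :: "nat \<Rightarrow> nat \<Rightarrow> 'a"
    and F H L Q :: "'a poly"
  assumes aut: "ring_automorphism \<sigma>"
    and R_fix: "R = {x. \<sigma> x = x}"
    and chain: "chain_ring R"
    and ext: "\<exists>(\<theta>::'a) (h::'a poly) (m::nat).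
        m \<ge> 1 \<and> lead_coeff h = 1 \<and> degree h = m \<and> set (coeffs h) \<subseteq> R \<and> poly h \<theta> = 0 \<and>
        (\<forall>s. \<exists>!p. set (coeffs p) \<subseteq> R \<and> degree p < m \<and> poly p \<theta> = s) \<and>
        \<not> (\<exists>f g. lead_coeff f = 1 \<and> lead_coeff g = 1 \<and> degree f \<ge> 1 \<and> degree g \<ge> 1 \<and>
               set (coeffs f) \<subseteq> R \<and> set (coeffs g) \<subseteq> R \<and>
               (\<forall>i. coeff (h - f * g) i \<in> nonunits R))"
    and galois: "\<forall>\<tau>. ring_automorphism \<tau> \<and> (\<forall>x\<in>R. \<tau> x = x) \<longrightarrow> (\<exists>i. \<tau> = \<sigma> ^^ i)"
    and frob: "\<forall>y. \<sigma> y - y ^ residue_card R \<in> nonunits UNIV"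
    and a_units: "\<forall>i<l. a i dvd 1"
    and cond_i: "\<forall>i j b. i < j \<and> j < l \<and> b dvd 1 \<longrightarrow> (a i - \<sigma> b * a j * inv_S b) dvd 1"
    and cond_ii: "\<forall>i<l. \<forall>x :: nat \<Rightarrow> 'a. (\<forall>j<nn i. x j \<in> R) \<and> (\<Sum>j<nn i. x j * \<beta> i j) = 0
                        \<longrightarrow> (\<forall>j<nn i. x j = 0)"
    and k_pos: "1 \<le> k" and k_le: "k \<le> (\<Sum>i<l. nn i) - 1"
    and code: "lrs_code \<sigma> k l nn a \<beta> c"
    and wt: "sum_rank_wt R l nn e \<le> ((\<Sum>i<l. nn i) - k) div 2"
    and rdef: "\<forall>i<l. \<forall>j<nn i. r i j = c i j + e i j"
    and F: "degree F < (\<Sum>i<l. nn i)"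
        "\<forall>i<l. \<forall>j<nn i. skew_eval \<sigma> F (\<sigma> (\<beta> i j) * a i * inv_S (\<beta> i j)) = c i j * inv_S (\<beta> i j)"
    and H: "degree H < (\<Sum>i<l. nn i)"
        "\<forall>i<l. \<forall>j<nn i. skew_eval \<sigma> H (\<sigma> (\<beta> i j) * a i * inv_S (\<beta> i j)) = r i j * inv_S (\<beta> i j)"
    and L_monic: "lead_coeff L = 1"
    and L_deg: "degree L \<le> ((\<Sum>i<l. nn i) - k) div 2"
    and Q_deg: "degree Q \<le> ((\<Sum>i<l. nn i) - k) div 2 + k - 1"
    and interp: "\<forall>i<l. \<forall>j<nn i. skew_eval \<sigma> (skew_mult \<sigma> L H) (\<sigma> (\<beta> i j) * a i * inv_S (\<beta> i j))
                                = skew_eval \<sigma> Q (\<sigma> (\<beta> i j) * a i * inv_S (\<beta> i j))"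
  shows "Q = skew_mult \<sigma> L F"
proof -
  obtain \<theta> h m where "chain_extension_axioms R \<theta> h m"
    using ext unfolding chain_extension_axioms_def by blast
  then interpret lrs_setting \<sigma> R \<theta> h m a l
    by (rule lrs_setting_intro[OF aut R_fix chain _ a_units cond_i])
  have indep: "\<forall>i<l. R_indep R (\<beta> i) (nn i)"
    using cond_ii by (simp add: R_indep_def)
  have unit: "\<beta> i j dvd 1" if "i < l" "j < nn i" for i j
    using R_indep_imp_unit indep that by blast
  obtain f where f: "degree f < k" "\<forall>i<l. \<forall>j<nn i. op_eval \<sigma> f (a i) (\<beta> i j) = c i j"
    using codeword_poly[OF code] k_pos by auto
  have "\<forall>i<l. \<forall>j<nn i. op_eval \<sigma> F (a i) (\<beta> i j) = c i j"
    using F(2) unit skew_eval_conj_eq by blast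
  then have "F = f"
    using op_eval_interpolation_unique[OF indep F(1)] f k_le by simp
  have "\<forall>i<l. \<forall>j<nn i. op_eval \<sigma> H (a i) (\<beta> i j) = c i j + e i j"
    using H(2) rdef unit skew_eval_conj_eq by simp
  moreover have "\<forall>i<l. \<forall>j<nn i. op_eval \<sigma> Q (a i) (\<beta> i j) = op_eval \<sigma> (skew_mult \<sigma> L H) (a i) (\<beta> i j)"
    using interp unit by (simp add: skew_eval_conj[symmetric])
  ultimately show ?thesis
    using key_equation_solution[OF indep _ _ f wt L_deg Q_deg] \<open>F = f\<close> k_pos k_le
    by (simp add: op_eval_skew_mult)
qed

end
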